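(* Consider Dis-Lion-VR (defined in the context) under Assumptions (D2) and (D3), with initial batch size $B_0\ge1$, $\beta_1,\beta_2\in(0,1]$, $\beta_1\le\sqrt{\beta_2}$, $B_0\beta_2\le1$, $\eta>0$, $0\le\lambda\le\frac1{2\eta T}$ and $\|\mathbf{x}_1\|_\infty\le\eta$. Then $$\mathbb{E}\left[\frac1T\sum_{t=1}^T\Big\|\frac1n\sum_{j=1}^n\mathbf{m}_t^j-\nabla f(\mathbf{x}_t)\Big\|^2\right]\le\frac{\sigma^2}{n\beta_2B_0T}+\frac{2\sigma^2\beta_2}{n}+\frac{8L^2\eta^2d}{n\beta_2}$$ and $$\mathbb{E}\left[\frac1T\sum_{t=1}^T\Big\|\frac1n\sum_{j=1}^n\mathbf{v}_t^j-\nabla f(\mathbf{x}_t)\Big\|^2\right]\le\frac{2\sigma^2}{\beta_2nB_0T}+\frac{16\eta^2L^2d}{n\beta_2}+\frac{4\beta_2\sigma^2}{n}.$$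
   Context: Distributed setting: $n$ nodes; $f(\mathbf{x})=\frac1n\sum_{j=1}^nf_j(\mathbf{x})$ with $f_j(\mathbf{x})=\mathbb{E}_{\xi^j\sim\mathcal{D}_j}[f_j(\mathbf{x};\xi^j)]$, where the $\mathcal{D}_j$ may differ. Node $j$ draws samples $\xi^j\sim\mathcal{D}_j$, independent across nodes and time and of everything before, and for a drawn sample can evaluate $\nabla f_j(\cdot;\xi^j)$ at several points. $\|\cdot\|$ is the Euclidean norm; $\operatorname{sign}$ acts coordinatewise with values in $\{-1,0,1\}$. (D2) $\mathbb{E}_\xi\|\nabla f_j(\mathbf{x};\xi)-\nabla f_j(\mathbf{y};\xi)\|^2\le L^2\|\mathbf{x}-\mathbf{y}\|^2$ for all $j,\mathbf{x},\mathbf{y}$. (D3) $\mathbb{E}_{\xi}[\nabla f_j(\mathbf{x};\xi)]=\nabla f_j(\mathbf{x})$ and $\mathbb{E}_\xi\|\nabla f_j(\mathbf{x};\xi)-\nabla f_j(\mathbf{x})\|^2\le\sigma^2$ for all $j,\mathbf{x}$. Dis-Lion-VR: given $\mathbf{x}_1$, $\beta_1,\beta_2,\eta,\lambda,B_0$. At $t=1$ each node draws independent $\xi_1^{j,1},\dots,\xi_1^{j,B_0}$ and sets $\mathbf{v}_1^j=\mathbf{m}_1^j=\frac1{B_0}\sum_{i=1}^{B_0}\nabla f_j(\mathbf{x}_1;\xi_1^{j,i})$. For $t\ge2$ each node draws a fresh $\xi_t^j$ and sets, with $\mathbf{g}_t^j=\nabla f_j(\mathbf{x}_t;\xi_t^j)$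 and $\mathbf{h}_t^j=\nabla f_j(\mathbf{x}_{t-1};\xi_t^j)$: $\mathbf{v}_t^j=(1-\beta_1)\mathbf{m}_{t-1}^j+\beta_1\mathbf{g}_t^j+(1-\beta_1)(\mathbf{g}_t^j-\mathbf{h}_t^j)$, $\mathbf{m}_t^j=(1-\beta_2)\mathbf{m}_{t-1}^j+\beta_2\mathbf{g}_t^j+(1-\beta_2)(\mathbf{g}_t^j-\mathbf{h}_t^j)$. The server forms $\mathbf{v}_t=\sum_{j=1}^n\mathbf{v}_t^j$ and all nodes update $\mathbf{x}_{t+1}=\mathbf{x}_t-\eta(\operatorname{sign}(\mathbf{v}_t)+\lambda\mathbf{x}_t)$. *)

theory Defs
  imports "HOL-Probability.Probability"
begin

definition vsign :: "real^'d \<Rightarrow> real^'d" where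
  "vsign v = (\<chi> i. sgn (v $ i))"

text \<open>State of Dis-Lion-VR at time t (t \<ge> 1): (x_t, (m_t^j)_j, (v_t^j)_j).
  Nodes are indexed j = 0..n-1.  g j x s is the stochastic gradient
  nabla f_j(x; s).  S (t, j, i) is the i-th sample drawn by node j at time t;
  at t = 1 the samples i = 0..B0-1 are used, at t \<ge> 2 only S (t, j, 0).
  The value at t = 0 is a dummy (equal to the t = 1 state).\<close>
fun lion_state ::
  "nat \<Rightarrow> nat \<Rightarrow> real \<Rightarrow> real \<Rightarrow> real \<Rightarrow> real \<Rightarrow> real^'d
   \<Rightarrow> (nat \<Rightarrow> real^'d \<Rightarrow> 's \<Rightarrow> real^'d) \<Rightarrow> (nat \<times> nat \<times> nat \<Rightarrow> 's) \<Rightarrow> nat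
   \<Rightarrow> (real^'d) \<times> (nat \<Rightarrow> real^'d) \<times> (nat \<Rightarrow> real^'d)" where
  "lion_state n B0 \<beta>1 \<beta>2 \<eta> wd x1 g S 0 =
     (x1, (\<lambda>j. (1 / real B0) *\<^sub>R (\<Sum>i<B0. g j x1 (S (1, j, i)))),
          (\<lambda>j. (1 / real B0) *\<^sub>R (\<Sum>i<B0. g j x1 (S (1, j, i)))))"
| "lion_state n B0 \<beta>1 \<beta>2 \<eta> wd x1 g S (Suc 0) =
     (x1, (\<lambda>j. (1 / real B0) *\<^sub>R (\<Sum>i<B0. g j x1 (S (1, j, i)))),
          (\<lambda>j. (1 / real B0) *\<^sub>R (\<Sum>i<B0. g j x1 (S (1, j, i)))))"
| "lion_state n B0 \<beta>1 \<beta>2 \<eta> wd x1 g S (Suc (Suc k)) =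
     (let (x, m, v) = lion_state n B0 \<beta>1 \<beta>2 \<eta> wd x1 g S (Suc k);
          t = Suc (Suc k);
          x' = x - \<eta> *\<^sub>R (vsign (\<Sum>j<n. v j) + wd *\<^sub>R x);
          gt = (\<lambda>j. g j x' (S (t, j, 0)));
          ht = (\<lambda>j. g j x (S (t, j, 0)))
      in (x',
          (\<lambda>j. (1 - \<beta>2) *\<^sub>R m j + \<beta>2 *\<^sub>R gt j + (1 - \<beta>2) *\<^sub>R (gt j - ht j)),
          (\<lambda>j. (1 - \<beta>1) *\<^sub>R m j + \<beta>1 *\<^sub>R gt j + (1 - \<beta>1) *\<^sub>R (gt j - ht j))))"

definition lion_x where
  "lion_x n B0 \<beta>1 \<beta>2 \<eta> wd x1 g S t = fst (lion_state n B0 \<beta>1 \<beta>2 \<eta> wd x1 g S t)"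
definition lion_m where
  "lion_m n B0 \<beta>1 \<beta>2 \<eta> wd x1 g S t = fst (snd (lion_state n B0 \<beta>1 \<beta>2 \<eta> wd x1 g S t))"
definition lion_v where
  "lion_v n B0 \<beta>1 \<beta>2 \<eta> wd x1 g S t = snd (snd (lion_state n B0 \<beta>1 \<beta>2 \<eta> wd x1 g S t))"

definition lion_samples :: "nat \<Rightarrow> nat \<Rightarrow> (nat \<times> nat \<times> nat) set" where
  "lion_samples n B0 = {(1, j, i) | j i. j < n \<and> i < B0} \<union> {(t, j, 0) | t j. 2 \<le> t \<and> j < n}"

end

theory Submission
  imports Defs
begin

text \<open>Let e_t be the averaged momentum error (1/n) \<Sum>_j m_t^j - \<nabla>f(x_t). Unrolling the
  variance-reduced update gives e_{t+1} = (1 - \<beta>_2) e_t + (1/n) \<Sum>_j \<zeta>_j, where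
  \<zeta>_j = (\<nabla>f_j(x_{t+1}; \<xi>) - \<nabla>f_j(x_{t+1})) - (1 - \<beta>_2) (\<nabla>f_j(x_t; \<xi>) - \<nabla>f_j(x_t))
  is built from the fresh sample of node j. Conditionally on the past the \<zeta>_j are centred
  and independent, so they add only their second moments, which (D2), (D3) bound by
  2 \<beta>_2^2 \<sigma>^2 + 2 L^2 \<parallel>x_{t+1} - x_t\<parallel>^2; the sign update with \<lambda> \<le> 1/(2 \<eta> T) moves each
  coordinate by at most 2 \<eta>, so \<parallel>x_{t+1} - x_t\<parallel>^2 \<le> 4 \<eta>^2 d. This yields
  E\<parallel>e_{t+1}\<parallel>^2 \<le> (1 - \<beta>_2)^2 E\<parallel>e_t\<parallel>^2 + (2 \<beta>_2^2 \<sigma>^2 + 8 L^2 \<eta>^2 d) / n with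
  E\<parallel>e_1\<parallel>^2 \<le> \<sigma>^2 / (n B_0), and summing the recursion gives the first bound. The v-error
  at t + 1 satisfies the same identity with \<beta>_1 in place of \<beta>_2 in front of the same e_t,
  and \<beta>_1^2 \<le> \<beta>_2 turns its bound into the second one.\<close>

lemma norm_add_power2_le:
  fixes a b :: "'a::real_inner"
  shows "(norm (a + b))\<^sup>2 \<le> 2 * (norm a)\<^sup>2 + 2 * (norm b)\<^sup>2"
proof -
  have "(norm (a + b))\<^sup>2 + (norm (a - b))\<^sup>2 = 2 * (norm a)\<^sup>2 + 2 * (norm b)\<^sup>2"
    by (simp add: power2_norm_eq_inner inner_add inner_diff inner_commute)
  then show ?thesis by (smt (verit) zero_le_power2)
qed

lemma scaleR_sum_affine:
  fixes u z :: "'i \<Rightarrow> 'a::real_vector"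
  shows "c *\<^sub>R (\<Sum>j\<in>A. a *\<^sub>R u j + z j) = a *\<^sub>R (c *\<^sub>R (\<Sum>j\<in>A. u j)) + (\<Sum>j\<in>A. c *\<^sub>R z j)"
  by (simp add: sum.distrib scaleR_add_right scaleR_sum_right ac_simps)

lemma sum_le_of_linear_recurrence:
  fixes a :: "nat \<Rightarrow> real"
  assumes rec: "\<And>k. a (Suc k) \<le> (1 - \<beta>) * a k + c" and nonneg: "\<And>k. 0 \<le> a k"
  shows "\<beta> * (\<Sum>k<N. a k) \<le> a 0 + real N * c"
proof -
  have "\<beta> * (\<Sum>k<N. a k) + a N \<le> a 0 + real N * c"
  proof (induction N)
    case (Suc N)
    have "\<beta> * (\<Sum>k<Suc N. a k) + a (Suc N) \<le> \<beta> * (\<Sum>k<N. a k) + a N + c"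
      using rec[of N] by (simp add: algebra_simps)
    with Suc.IH show ?case by (simp add: algebra_simps)
  qed simp
  with nonneg[of N] show ?thesis by linarith
qed

lemma nn_integral_norm_scaleR_power2:
  fixes f :: "'s \<Rightarrow> 'a::real_normed_vector"
  assumes [measurable]: "f \<in> borel_measurable D"
  shows "(\<integral>\<^sup>+s. ennreal ((norm (c *\<^sub>R f s))\<^sup>2) \<partial>D) = ennreal (c\<^sup>2) * (\<integral>\<^sup>+s. ennreal ((norm (f s))\<^sup>2) \<partial>D)"
proof -
  have "(\<integral>\<^sup>+s. ennreal ((norm (c *\<^sub>R f s))\<^sup>2) \<partial>D) = (\<integral>\<^sup>+s. ennreal (c\<^sup>2) * ennreal ((norm (f s))\<^sup>2) \<partial>D)"
    by (simp add: power_mult_distrib ennreal_mult)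
  also have "\<dots> = ennreal (c\<^sup>2) * (\<integral>\<^sup>+s. ennreal ((norm (f s))\<^sup>2) \<partial>D)"
    by (rule nn_integral_cmult) measurable
  finally show ?thesis .
qed

lemma nn_integral_time_average_le:
  fixes F :: "nat \<Rightarrow> 'w \<Rightarrow> 'a::real_normed_vector"
  assumes meas: "\<And>k. (\<lambda>\<omega>. ennreal ((norm (F (Suc k) \<omega>))\<^sup>2)) \<in> borel_measurable M"
    and bound: "\<And>k. k < T \<Longrightarrow> (\<integral>\<^sup>+\<omega>. ennreal ((norm (F (Suc k) \<omega>))\<^sup>2) \<partial>M) \<le> ennreal (r k)"
    and nonneg: "\<And>k. 0 \<le> r k"
  shows "(\<integral>\<^sup>+\<omega>. ennreal ((1 / real T) * (\<Sum>t=1..T. (norm (F t \<omega>))\<^sup>2)) \<partial>M)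
         \<le> ennreal ((1 / real T) * (\<Sum>k<T. r k))"
proof -
  have "(\<integral>\<^sup>+\<omega>. ennreal ((1 / real T) * (\<Sum>t=1..T. (norm (F t \<omega>))\<^sup>2)) \<partial>M)
      = (\<integral>\<^sup>+\<omega>. ennreal (1 / real T) * (\<Sum>k<T. ennreal ((norm (F (Suc k) \<omega>))\<^sup>2)) \<partial>M)"
    by (intro nn_integral_cong, subst ennreal_mult) (auto simp: sum.atLeast1_atMost_eq sum_nonneg)
  also have "\<dots> = ennreal (1 / real T) * (\<Sum>k<T. \<integral>\<^sup>+\<omega>. ennreal ((norm (F (Suc k) \<omega>))\<^sup>2) \<partial>M)"
    using meas by (simp add: nn_integral_cmult nn_integral_sum del: sum_ennreal)
  also have "\<dots> \<le> ennreal (1 / real T) * (\<Sum>k<T. ennreal (r k))"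
    by (intro mult_left_mono sum_mono bound) auto
  also have "\<dots> = ennreal ((1 / real T) * (\<Sum>k<T. r k))"
    using nonneg by (subst ennreal_mult) (auto intro: sum_nonneg)
  finally show ?thesis .
qed

lemma nn_integral_norm_add_centered:
  fixes \<phi> :: "'s \<Rightarrow> 'a::euclidean_space"
  assumes D: "prob_space D" and int: "integrable D \<phi>" and mean: "(\<integral>s. \<phi> s \<partial>D) = 0"
  shows "(\<integral>\<^sup>+s. ennreal ((norm (w + \<phi> s))\<^sup>2) \<partial>D)
         = ennreal ((norm w)\<^sup>2) + (\<integral>\<^sup>+s. ennreal ((norm (\<phi> s))\<^sup>2) \<partial>D)"
proof -
  interpret prob_space D by (rule D)
  have [measurable]: "\<phi> \<in> borel_measurable D" using int by auto
  show ?thesis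
  proof (cases "(\<integral>\<^sup>+s. ennreal ((norm (\<phi> s))\<^sup>2) \<partial>D) = \<infinity>")
    case True
    have "(\<integral>\<^sup>+s. ennreal ((norm (\<phi> s))\<^sup>2) \<partial>D)
          \<le> (\<integral>\<^sup>+s. 2 * ennreal ((norm (w + \<phi> s))\<^sup>2) + ennreal (2 * (norm w)\<^sup>2) \<partial>D)"
    proof (rule nn_integral_mono)
      fix s
      have "(norm (\<phi> s))\<^sup>2 \<le> 2 * (norm (w + \<phi> s))\<^sup>2 + 2 * (norm w)\<^sup>2"
        using norm_add_power2_le[of "w + \<phi> s" "- w"] by simp
      then show "ennreal ((norm (\<phi> s))\<^sup>2) \<le> 2 * ennreal ((norm (w + \<phi> s))\<^sup>2) + ennreal (2 * (norm w)\<^sup>2)"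
        by (rule order_trans[OF ennreal_leI]) (simp add: ennreal_mult')
    qed
    also have "\<dots> = 2 * (\<integral>\<^sup>+s. ennreal ((norm (w + \<phi> s))\<^sup>2) \<partial>D) + ennreal (2 * (norm w)\<^sup>2)"
      by (simp add: nn_integral_add nn_integral_cmult emeasure_space_1)
    finally have "(\<integral>\<^sup>+s. ennreal ((norm (w + \<phi> s))\<^sup>2) \<partial>D) = \<infinity>"
      using True by (auto simp: top_unique ennreal_mult_eq_top_iff)
    then show ?thesis using True by simp
  next
    case False
    obtain r where "(\<integral>\<^sup>+s. ennreal ((norm (\<phi> s))\<^sup>2) \<partial>D) = ennreal r"
      using False by (cases "\<integral>\<^sup>+s. ennreal ((norm (\<phi> s))\<^sup>2) \<partial>D" rule: ennreal_cases) auto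
    then have sq: "integrable D (\<lambda>s. (norm (\<phi> s))\<^sup>2)"
      by (intro integrableI_nn_integral_finite) auto
    have expand: "(norm (w + \<phi> s))\<^sup>2 = (norm w)\<^sup>2 + 2 * (w \<bullet> \<phi> s) + (norm (\<phi> s))\<^sup>2" for s
      by (simp add: power2_norm_eq_inner inner_add algebra_simps inner_commute)
    have "integrable D (\<lambda>s. (norm (w + \<phi> s))\<^sup>2)"
      unfolding expand using sq int by auto
    then have "(\<integral>\<^sup>+s. ennreal ((norm (w + \<phi> s))\<^sup>2) \<partial>D) = ennreal (\<integral>s. (norm (w + \<phi> s))\<^sup>2 \<partial>D)"
      by (intro nn_integral_eq_integral) auto
    also have "(\<integral>s. (norm (w + \<phi> s))\<^sup>2 \<partial>D) = (norm w)\<^sup>2 + (\<integral>s. (norm (\<phi> s))\<^sup>2 \<partial>D)"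
      unfolding expand using sq int mean by (simp add: prob_space)
    also have "ennreal \<dots> = ennreal ((norm w)\<^sup>2) + (\<integral>\<^sup>+s. ennreal ((norm (\<phi> s))\<^sup>2) \<partial>D)"
      using sq by (simp add: nn_integral_eq_integral)
    finally show ?thesis .
  qed
qed

lemma nn_integral_norm_centered_le:
  fixes u :: "'s \<Rightarrow> 'a::euclidean_space"
  assumes D: "prob_space D" and u: "integrable D u"
  shows "(\<integral>\<^sup>+s. ennreal ((norm (u s - (\<integral>s. u s \<partial>D)))\<^sup>2) \<partial>D) \<le> (\<integral>\<^sup>+s. ennreal ((norm (u s))\<^sup>2) \<partial>D)"
proof -
  interpret prob_space D by (rule D)
  let ?U = "\<integral>s. u s \<partial>D"
  have "(\<integral>\<^sup>+s. ennreal ((norm (u s))\<^sup>2) \<partial>D) = (\<integral>\<^sup>+s. ennreal ((norm (?U + (u s - ?U)))\<^sup>2) \<partial>D)"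
    by simp
  also have "\<dots> = ennreal ((norm ?U)\<^sup>2) + (\<integral>\<^sup>+s. ennreal ((norm (u s - ?U))\<^sup>2) \<partial>D)"
    using u by (intro nn_integral_norm_add_centered D) (auto simp: prob_space)
  finally show ?thesis by simp
qed

lemma nn_integral_momentum_noise_le:
  fixes u w :: "'s \<Rightarrow> 'a::euclidean_space"
  assumes D: "prob_space D" and u: "integrable D u" and w: "integrable D w"
    and U: "(\<integral>s. u s \<partial>D) = U" and W: "(\<integral>s. w s \<partial>D) = W"
    and var: "(\<integral>\<^sup>+s. ennreal ((norm (u s - U))\<^sup>2) \<partial>D) \<le> ennreal (\<sigma>\<^sup>2)"
    and lip: "(\<integral>\<^sup>+s. ennreal ((norm (u s - w s))\<^sup>2) \<partial>D) \<le> ennreal \<delta>"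
    and b: "0 \<le> b" "b \<le> 1" and \<delta>: "0 \<le> \<delta>"
  shows "(\<integral>\<^sup>+s. ennreal ((norm ((u s - U) - (1 - b) *\<^sub>R (w s - W)))\<^sup>2) \<partial>D)
         \<le> ennreal (2 * b\<^sup>2 * \<sigma>\<^sup>2 + 2 * \<delta>)"
proof -
  interpret prob_space D by (rule D)
  have [measurable]: "u \<in> borel_measurable D" "w \<in> borel_measurable D" using u w by auto
  define e where "e s = (u s - w s) - (U - W)" for s
  have pointwise: "(norm ((u s - U) - (1 - b) *\<^sub>R (w s - W)))\<^sup>2
                   \<le> 2 * b\<^sup>2 * (norm (u s - U))\<^sup>2 + 2 * (norm (e s))\<^sup>2" for s
  proof -
    have "(u s - U) - (1 - b) *\<^sub>R (w s - W) = b *\<^sub>R (u s - U) + (1 - b) *\<^sub>R e s"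
      by (simp add: e_def algebra_simps)
    then have "(norm ((u s - U) - (1 - b) *\<^sub>R (w s - W)))\<^sup>2
               \<le> 2 * (norm (b *\<^sub>R (u s - U)))\<^sup>2 + 2 * (norm ((1 - b) *\<^sub>R e s))\<^sup>2"
      by (metis norm_add_power2_le)
    moreover have "(norm ((1 - b) *\<^sub>R e s))\<^sup>2 \<le> (norm (e s))\<^sup>2"
      using b by (simp add: power_mult_distrib mult_left_le_one_le power_le_one)
    ultimately show ?thesis using b by (simp add: power_mult_distrib)
  qed
  have e_var: "(\<integral>\<^sup>+s. ennreal ((norm (e s))\<^sup>2) \<partial>D) \<le> ennreal \<delta>"
  proof -
    have "(\<integral>s. u s - w s \<partial>D) = U - W" using u w U W by simp
    then have "(\<integral>\<^sup>+s. ennreal ((norm (e s))\<^sup>2) \<partial>D) \<le> (\<integral>\<^sup>+s. ennreal ((norm (u s - w s))\<^sup>2) \<partial>D)"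
      using nn_integral_norm_centered_le[OF D, of "\<lambda>s. u s - w s"] u w by (simp add: e_def)
    with lip show ?thesis by order
  qed
  have "(\<integral>\<^sup>+s. ennreal ((norm ((u s - U) - (1 - b) *\<^sub>R (w s - W)))\<^sup>2) \<partial>D)
        \<le> (\<integral>\<^sup>+s. ennreal (2 * b\<^sup>2) * ennreal ((norm (u s - U))\<^sup>2) + 2 * ennreal ((norm (e s))\<^sup>2) \<partial>D)"
    by (intro nn_integral_mono order_trans[OF ennreal_leI[OF pointwise]]) (simp add: ennreal_mult')
  also have "\<dots> = ennreal (2 * b\<^sup>2) * (\<integral>\<^sup>+s. ennreal ((norm (u s - U))\<^sup>2) \<partial>D)
                  + 2 * (\<integral>\<^sup>+s. ennreal ((norm (e s))\<^sup>2) \<partial>D)"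
    by (simp add: e_def nn_integral_add nn_integral_cmult)
  also have "\<dots> \<le> ennreal (2 * b\<^sup>2) * ennreal (\<sigma>\<^sup>2) + 2 * ennreal \<delta>"
    by (intro add_mono mult_left_mono var e_var) auto
  also have "\<dots> = ennreal (2 * b\<^sup>2 * \<sigma>\<^sup>2 + 2 * \<delta>)"
    using \<delta> by (simp add: ennreal_mult')
  finally show ?thesis .
qed

definition depends_only_on :: "'i set \<Rightarrow> (('i \<Rightarrow> 's) \<Rightarrow> 'b) \<Rightarrow> bool" where
  "depends_only_on J F \<longleftrightarrow> (\<forall>S S'. (\<forall>i\<in>J. S i = S' i) \<longrightarrow> F S = F S')"

lemma depends_only_onI:
  "(\<And>S S'. (\<And>i. i \<in> J \<Longrightarrow> S i = S' i) \<Longrightarrow> F S = F S') \<Longrightarrow> depends_only_on J F"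
  unfolding depends_only_on_def by blast

lemma depends_only_onD:
  "depends_only_on J F \<Longrightarrow> (\<And>i. i \<in> J \<Longrightarrow> S i = S' i) \<Longrightarrow> F S = F S'"
  unfolding depends_only_on_def by blast

lemma depends_only_on_mono: "depends_only_on J F \<Longrightarrow> J \<subseteq> J' \<Longrightarrow> depends_only_on J' F"
  unfolding depends_only_on_def by blast

lemma depends_only_on_comp2:
  "depends_only_on J F \<Longrightarrow> depends_only_on J G \<Longrightarrow> depends_only_on J (\<lambda>S. h (F S) (G S))"
  unfolding depends_only_on_def by metis

lemma depends_only_on_comp:
  "depends_only_on J F \<Longrightarrow> depends_only_on J (\<lambda>S. h (F S))"
  unfolding depends_only_on_def by metis

locale indep_samples = prob_space M + product_sigma_finite P
  for M :: "'w measure" and P :: "'i \<Rightarrow> 's measure" +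
  fixes \<xi> :: "'i \<Rightarrow> 'w \<Rightarrow> 's" and K :: "'i set"
  assumes sample_prob_space: "k \<in> K \<Longrightarrow> prob_space (P k)"
    and sample_distr: "k \<in> K \<Longrightarrow> distr M (P k) (\<xi> k) = P k"
    and samples_indep: "indep_vars P \<xi> K"
begin

lemma sample_measurable: "k \<in> K \<Longrightarrow> \<xi> k \<in> measurable M (P k)"
  using samples_indep unfolding indep_vars_def by auto

lemma measurable_restrict_samples: "J \<subseteq> K \<Longrightarrow> (\<lambda>\<omega>. \<lambda>i\<in>J. \<xi> i \<omega>) \<in> measurable M (PiM J P)"
  by (rule measurable_restrict) (auto intro: sample_measurable)

lemma prob_space_PiM_samples: "J \<subseteq> K \<Longrightarrow> prob_space (PiM J P)"
  by (rule prob_space_PiM) (auto intro: sample_prob_space)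

lemma distr_restrict_samples:
  assumes "J \<subseteq> K" "J \<noteq> {}"
  shows "distr M (PiM J P) (\<lambda>\<omega>. \<lambda>i\<in>J. \<xi> i \<omega>) = PiM J P"
proof -
  have "distr M (PiM J P) (\<lambda>\<omega>. \<lambda>i\<in>J. \<xi> i \<omega>) = PiM J (\<lambda>i. distr M (P i) (\<xi> i))"
    using indep_vars_subset[OF samples_indep assms(1)] assms
    by (subst (asm) indep_vars_iff_distr_eq_PiM') (auto intro: sample_measurable)
  also have "\<dots> = PiM J P"
    using assms by (intro PiM_cong) (auto simp: sample_distr)
  finally show ?thesis .
qed

lemma measurable_sample_functional:
  assumes "J \<subseteq> K" and dep: "depends_only_on J F" and F: "F \<in> measurable (PiM J P) N"
  shows "(\<lambda>\<omega>. F (\<lambda>i. \<xi> i \<omega>)) \<in> measurable M N"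
proof -
  have "(\<lambda>\<omega>. F (\<lambda>i\<in>J. \<xi> i \<omega>)) \<in> measurable M N"
    using measurable_compose[OF measurable_restrict_samples[OF assms(1)] F] .
  moreover have "F (\<lambda>i\<in>J. \<xi> i \<omega>) = F (\<lambda>i. \<xi> i \<omega>)" for \<omega>
    by (rule depends_only_onD[OF dep]) simp
  ultimately show ?thesis by simp
qed

lemma nn_integral_fresh_sample:
  assumes J: "finite J" "J \<subseteq> K" and k: "k \<in> K" "k \<notin> J"
    and dep: "depends_only_on J G"
    and G: "(\<lambda>p. G (fst p) (snd p)) \<in> borel_measurable (PiM J P \<Otimes>\<^sub>M P k)"
  shows "(\<integral>\<^sup>+\<omega>. G (\<lambda>i. \<xi> i \<omega>) (\<xi> k \<omega>) \<partial>M) = (\<integral>\<^sup>+S. (\<integral>\<^sup>+s. G S s \<partial>P k) \<partial>PiM J P)"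
proof -
  let ?K = "insert k J"
  have K: "?K \<subseteq> K" using J k by auto
  define H where "H y = G (restrict y J) (y k)" for y
  have H: "H \<in> borel_measurable (PiM ?K P)"
  proof -
    have "(\<lambda>y. (restrict y J, y k)) \<in> measurable (PiM ?K P) (PiM J P \<Otimes>\<^sub>M P k)"
      by (intro measurable_Pair measurable_restrict_subset measurable_component_singleton) auto
    from measurable_compose[OF this G] show ?thesis unfolding H_def by simp
  qed
  have "(\<integral>\<^sup>+\<omega>. G (\<lambda>i. \<xi> i \<omega>) (\<xi> k \<omega>) \<partial>M) = (\<integral>\<^sup>+\<omega>. H (\<lambda>i\<in>?K. \<xi> i \<omega>) \<partial>M)"
  proof (rule nn_integral_cong)
    fix \<omega>
    have "G (\<lambda>i\<in>J. \<xi> i \<omega>) = G (\<lambda>i. \<xi> i \<omega>)" by (rule depends_only_onD[OF dep]) simp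
    then show "G (\<lambda>i. \<xi> i \<omega>) (\<xi> k \<omega>) = H (\<lambda>i\<in>?K. \<xi> i \<omega>)"
      unfolding H_def by (simp add: restrict_def cong: if_cong)
  qed
  also have "\<dots> = (\<integral>\<^sup>+y. H y \<partial>distr M (PiM ?K P) (\<lambda>\<omega>. \<lambda>i\<in>?K. \<xi> i \<omega>))"
    using H measurable_restrict_samples[OF K] by (simp add: nn_integral_distr)
  also have "\<dots> = (\<integral>\<^sup>+y. H y \<partial>PiM ?K P)"
    by (simp add: distr_restrict_samples[OF K])
  also have "\<dots> = (\<integral>\<^sup>+S. (\<integral>\<^sup>+s. H (S(k := s)) \<partial>P k) \<partial>PiM J P)"
    using J k H by (intro product_nn_integral_insert) auto
  also have "\<dots> = (\<integral>\<^sup>+S. (\<integral>\<^sup>+s. G S s \<partial>P k) \<partial>PiM J P)"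
  proof (intro nn_integral_cong)
    fix S s
    have "G (restrict (S(k := s)) J) = G S" by (rule depends_only_onD[OF dep]) (use k in auto)
    then show "H (S(k := s)) = G S s" unfolding H_def by simp
  qed
  finally show ?thesis .
qed

lemma nn_integral_add_centered_sample:
  fixes W :: "('i \<Rightarrow> 's) \<Rightarrow> 'a::euclidean_space" and \<phi> :: "('i \<Rightarrow> 's) \<Rightarrow> 's \<Rightarrow> 'a"
  assumes J: "finite J" "J \<subseteq> K" and k: "k \<in> K" "k \<notin> J"
    and W: "depends_only_on J W" "W \<in> borel_measurable (PiM J P)"
    and \<phi>: "depends_only_on J \<phi>" "(\<lambda>p. \<phi> (fst p) (snd p)) \<in> borel_measurable (PiM J P \<Otimes>\<^sub>M P k)"
    and int: "\<And>S. integrable (P k) (\<phi> S)" and mean: "\<And>S. (\<integral>s. \<phi> S s \<partial>P k) = 0"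
    and bound: "\<And>S. (\<integral>\<^sup>+s. ennreal ((norm (\<phi> S s))\<^sup>2) \<partial>P k) \<le> ennreal C"
  shows "(\<integral>\<^sup>+\<omega>. ennreal ((norm (W (\<lambda>i. \<xi> i \<omega>) + \<phi> (\<lambda>i. \<xi> i \<omega>) (\<xi> k \<omega>)))\<^sup>2) \<partial>M)
         \<le> (\<integral>\<^sup>+\<omega>. ennreal ((norm (W (\<lambda>i. \<xi> i \<omega>)))\<^sup>2) \<partial>M) + ennreal C"
proof -
  interpret Pk: prob_space "P k" using sample_prob_space[OF k(1)] .
  interpret PJ: prob_space "PiM J P" using prob_space_PiM_samples[OF J(2)] .
  note [measurable] = W(2) \<phi>(2)
  have "(\<integral>\<^sup>+\<omega>. ennreal ((norm (W (\<lambda>i. \<xi> i \<omega>) + \<phi> (\<lambda>i. \<xi> i \<omega>) (\<xi> k \<omega>)))\<^sup>2) \<partial>M)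
      = (\<integral>\<^sup>+S. (\<integral>\<^sup>+s. ennreal ((norm (W S + \<phi> S s))\<^sup>2) \<partial>P k) \<partial>PiM J P)"
    by (rule nn_integral_fresh_sample[OF J k depends_only_on_comp2[OF W(1) \<phi>(1)]]) measurable
  also have "\<dots> = (\<integral>\<^sup>+S. ennreal ((norm (W S))\<^sup>2) + (\<integral>\<^sup>+s. ennreal ((norm (\<phi> S s))\<^sup>2) \<partial>P k) \<partial>PiM J P)"
    by (intro nn_integral_cong nn_integral_norm_add_centered Pk.prob_space_axioms int mean)
  also have "\<dots> \<le> (\<integral>\<^sup>+S. ennreal ((norm (W S))\<^sup>2) + ennreal C \<partial>PiM J P)"
    by (intro nn_integral_mono add_left_mono bound)
  also have "\<dots> = (\<integral>\<^sup>+S. (\<integral>\<^sup>+s. ennreal ((norm (W S))\<^sup>2) \<partial>P k) \<partial>PiM J P) + ennreal C"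
    by (simp add: nn_integral_add PJ.emeasure_space_1 Pk.emeasure_space_1)
  also have "(\<integral>\<^sup>+S. (\<integral>\<^sup>+s. ennreal ((norm (W S))\<^sup>2) \<partial>P k) \<partial>PiM J P)
      = (\<integral>\<^sup>+\<omega>. ennreal ((norm (W (\<lambda>i. \<xi> i \<omega>)))\<^sup>2) \<partial>M)"
    by (rule nn_integral_fresh_sample[OF J k depends_only_on_comp[OF W(1)], symmetric]) measurable
  finally show ?thesis .
qed

lemma nn_integral_add_centered_samples:
  fixes W :: "('i \<Rightarrow> 's) \<Rightarrow> 'a::euclidean_space" and \<phi> :: "'i \<Rightarrow> ('i \<Rightarrow> 's) \<Rightarrow> 's \<Rightarrow> 'a"
  assumes J: "finite J" "J \<subseteq> K" and Ks: "finite Ks" "Ks \<subseteq> K" "Ks \<inter> J = {}"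
    and W: "depends_only_on J W" "\<And>J'. J \<subseteq> J' \<Longrightarrow> W \<in> borel_measurable (PiM J' P)"
    and \<phi>: "\<And>k. k \<in> Ks \<Longrightarrow> depends_only_on J (\<phi> k)"
      "\<And>k J'. k \<in> Ks \<Longrightarrow> J \<subseteq> J' \<Longrightarrow> (\<lambda>p. \<phi> k (fst p) (snd p)) \<in> borel_measurable (PiM J' P \<Otimes>\<^sub>M P k)"
    and int: "\<And>k S. k \<in> Ks \<Longrightarrow> integrable (P k) (\<phi> k S)"
    and mean: "\<And>k S. k \<in> Ks \<Longrightarrow> (\<integral>s. \<phi> k S s \<partial>P k) = 0"
    and bound: "\<And>k S. k \<in> Ks \<Longrightarrow> (\<integral>\<^sup>+s. ennreal ((norm (\<phi> k S s))\<^sup>2) \<partial>P k) \<le> ennreal C"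
    and C: "0 \<le> C"
  shows "(\<integral>\<^sup>+\<omega>. ennreal ((norm (W (\<lambda>i. \<xi> i \<omega>) + (\<Sum>k\<in>Ks. \<phi> k (\<lambda>i. \<xi> i \<omega>) (\<xi> k \<omega>))))\<^sup>2) \<partial>M)
         \<le> (\<integral>\<^sup>+\<omega>. ennreal ((norm (W (\<lambda>i. \<xi> i \<omega>)))\<^sup>2) \<partial>M) + ennreal (real (card Ks) * C)"
  using Ks(1) order_refl[of Ks]
proof (induction Ks rule: finite_subset_induct')
  case (insert a F)
  define W' where "W' S = W S + (\<Sum>k\<in>F. \<phi> k S (S k))" for S
  have J': "finite (J \<union> F)" "J \<union> F \<subseteq> K" and a: "a \<in> K" "a \<notin> J \<union> F"
    using insert J Ks by auto
  have "depends_only_on (J \<union> F) W'"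
  proof (rule depends_only_onI)
    fix S S' :: "'i \<Rightarrow> 's" assume S: "\<And>i. i \<in> J \<union> F \<Longrightarrow> S i = S' i"
    have "\<phi> k S = \<phi> k S'" if "k \<in> F" for k
      using that insert.hyps S by (intro depends_only_onD[OF \<phi>(1)]) auto
    then show "W' S = W' S'"
      unfolding W'_def using S depends_only_onD[OF W(1), of S S'] by (auto intro!: sum.cong)
  qed
  moreover have "W' \<in> borel_measurable (PiM (J \<union> F) P)"
  proof -
    have "(\<lambda>S. \<phi> k S (S k)) \<in> borel_measurable (PiM (J \<union> F) P)" if "k \<in> F" for k
    proof -
      have "(\<lambda>S. (S, S k)) \<in> measurable (PiM (J \<union> F) P) (PiM (J \<union> F) P \<Otimes>\<^sub>M P k)"
        using that by (intro measurable_Pair measurable_ident_sets measurable_component_singleton) auto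
      from measurable_compose[OF this \<phi>(2)] show ?thesis using that insert.hyps by auto
    qed
    then show ?thesis unfolding W'_def[abs_def] using W(2) by measurable
  qed
  ultimately have "(\<integral>\<^sup>+\<omega>. ennreal ((norm (W' (\<lambda>i. \<xi> i \<omega>) + \<phi> a (\<lambda>i. \<xi> i \<omega>) (\<xi> a \<omega>)))\<^sup>2) \<partial>M)
      \<le> (\<integral>\<^sup>+\<omega>. ennreal ((norm (W' (\<lambda>i. \<xi> i \<omega>)))\<^sup>2) \<partial>M) + ennreal C"
    using insert.hyps
    by (intro nn_integral_add_centered_sample[OF J' a] depends_only_on_mono[OF \<phi>(1)] \<phi>(2) int mean bound) auto
  also have "\<dots> \<le> (\<integral>\<^sup>+\<omega>. ennreal ((norm (W (\<lambda>i. \<xi> i \<omega>)))\<^sup>2) \<partial>M) + ennreal (real (card F) * C) + ennreal C"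
    using insert.IH unfolding W'_def by (intro add_right_mono) auto
  also have "\<dots> = (\<integral>\<^sup>+\<omega>. ennreal ((norm (W (\<lambda>i. \<xi> i \<omega>)))\<^sup>2) \<partial>M) + ennreal (real (card (insert a F)) * C)"
    using insert C by (simp add: add.assoc algebra_simps flip: ennreal_plus)
  finally show ?case
    using insert.hyps by (simp add: W'_def add.commute add.left_commute)
qed simp

end

lemma borel_measurable_vsign [measurable]:
  assumes "F \<in> borel_measurable N"
  shows "(\<lambda>\<omega>. vsign (F \<omega>)) \<in> borel_measurable N"
proof -
  have "(\<lambda>\<omega>. vsign (F \<omega>) \<bullet> b) \<in> borel_measurable N" if "b \<in> Basis" for b
  proof -
    from that obtain i where b: "b = axis i (1::real)" unfolding Basis_vec_def by auto
    have "(\<lambda>\<omega>. sgn (F \<omega> \<bullet> b)) \<in> borel_measurable N" using assms by measurable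
    then show ?thesis by (simp add: b inner_axis vsign_def)
  qed
  then show ?thesis by (subst borel_measurable_euclidean_space) auto
qed

lemma lion_x_Suc_0: "lion_x n B0 \<beta>1 \<beta>2 \<eta> wd x1 g S (Suc 0) = x1"
  by (simp add: lion_x_def)

lemma lion_m_Suc_0:
  "lion_m n B0 \<beta>1 \<beta>2 \<eta> wd x1 g S (Suc 0) j = (1 / real B0) *\<^sub>R (\<Sum>i<B0. g j x1 (S (1, j, i)))"
  by (simp add: lion_m_def)

lemma lion_v_Suc_0:
  "lion_v n B0 \<beta>1 \<beta>2 \<eta> wd x1 g S (Suc 0) j = (1 / real B0) *\<^sub>R (\<Sum>i<B0. g j x1 (S (1, j, i)))"
  by (simp add: lion_v_def)

lemma lion_x_Suc_Suc:
  "lion_x n B0 \<beta>1 \<beta>2 \<eta> wd x1 g S (Suc (Suc k)) =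
     lion_x n B0 \<beta>1 \<beta>2 \<eta> wd x1 g S (Suc k)
     - \<eta> *\<^sub>R (vsign (\<Sum>j<n. lion_v n B0 \<beta>1 \<beta>2 \<eta> wd x1 g S (Suc k) j)
              + wd *\<^sub>R lion_x n B0 \<beta>1 \<beta>2 \<eta> wd x1 g S (Suc k))"
  by (simp add: lion_x_def lion_v_def split: prod.split)

lemma lion_m_Suc_Suc:
  "lion_m n B0 \<beta>1 \<beta>2 \<eta> wd x1 g S (Suc (Suc k)) j =
     (1 - \<beta>2) *\<^sub>R lion_m n B0 \<beta>1 \<beta>2 \<eta> wd x1 g S (Suc k) j
     + \<beta>2 *\<^sub>R g j (lion_x n B0 \<beta>1 \<beta>2 \<eta> wd x1 g S (Suc (Suc k))) (S (Suc (Suc k), j, 0))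
     + (1 - \<beta>2) *\<^sub>R (g j (lion_x n B0 \<beta>1 \<beta>2 \<eta> wd x1 g S (Suc (Suc k))) (S (Suc (Suc k), j, 0))
                     - g j (lion_x n B0 \<beta>1 \<beta>2 \<eta> wd x1 g S (Suc k)) (S (Suc (Suc k), j, 0)))"
  by (simp add: lion_x_def lion_v_def lion_m_def Let_def split: prod.split)

lemma lion_v_Suc_Suc:
  "lion_v n B0 \<beta>1 \<beta>2 \<eta> wd x1 g S (Suc (Suc k)) j =
     (1 - \<beta>1) *\<^sub>R lion_m n B0 \<beta>1 \<beta>2 \<eta> wd x1 g S (Suc k) j
     + \<beta>1 *\<^sub>R g j (lion_x n B0 \<beta>1 \<beta>2 \<eta> wd x1 g S (Suc (Suc k))) (S (Suc (Suc k), j, 0))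
     + (1 - \<beta>1) *\<^sub>R (g j (lion_x n B0 \<beta>1 \<beta>2 \<eta> wd x1 g S (Suc (Suc k))) (S (Suc (Suc k), j, 0))
                     - g j (lion_x n B0 \<beta>1 \<beta>2 \<eta> wd x1 g S (Suc k)) (S (Suc (Suc k), j, 0)))"
  by (simp add: lion_x_def lion_v_def lion_m_def Let_def split: prod.split)

lemma lion_x_coord_bound:
  assumes eta: "0 < \<eta>" and wd: "0 \<le> wd" "\<eta> * wd \<le> 1" and x1: "\<And>i. \<bar>x1 $ i\<bar> \<le> \<eta>"
  shows "\<bar>lion_x n B0 \<beta>1 \<beta>2 \<eta> wd x1 g S (Suc k) $ i\<bar> \<le> real (Suc k) * \<eta>"
proof (induction k)
  case 0
  then show ?case using x1 by (simp add: lion_x_Suc_0)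
next
  case (Suc k)
  let ?x = "lion_x n B0 \<beta>1 \<beta>2 \<eta> wd x1 g S (Suc k) $ i"
    and ?s = "sgn ((\<Sum>j<n. lion_v n B0 \<beta>1 \<beta>2 \<eta> wd x1 g S (Suc k) j) $ i)"
  have "lion_x n B0 \<beta>1 \<beta>2 \<eta> wd x1 g S (Suc (Suc k)) $ i = (1 - \<eta> * wd) * ?x - \<eta> * ?s"
    by (simp add: lion_x_Suc_Suc vsign_def algebra_simps)
  also have "\<bar>\<dots>\<bar> \<le> (1 - \<eta> * wd) * \<bar>?x\<bar> + \<eta> * \<bar>?s\<bar>"
    using abs_triangle_ineq4[of "(1 - \<eta> * wd) * ?x" "\<eta> * ?s"] eta wd by (simp add: abs_mult)
  also have "\<dots> \<le> \<bar>?x\<bar> + \<eta>"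
    using eta wd by (intro add_mono mult_left_le_one_le mult_right_le_one_le) (auto simp: abs_sgn_eq)
  also have "\<dots> \<le> real (Suc (Suc k)) * \<eta>"
    using Suc.IH by (simp add: algebra_simps)
  finally show ?case .
qed

lemma lion_x_step_norm_le:
  fixes x1 :: "real^'d"
  assumes eta: "0 < \<eta>" and wd: "0 \<le> wd" "\<eta> * wd * real (Suc k) \<le> 1"
    and x1: "\<And>i. \<bar>x1 $ i\<bar> \<le> \<eta>"
  shows "(norm (lion_x n B0 \<beta>1 \<beta>2 \<eta> wd x1 g S (Suc (Suc k)) - lion_x n B0 \<beta>1 \<beta>2 \<eta> wd x1 g S (Suc k)))\<^sup>2
         \<le> 4 * \<eta>\<^sup>2 * real CARD('d)"
proof -
  define z where
    "z = lion_x n B0 \<beta>1 \<beta>2 \<eta> wd x1 g S (Suc (Suc k)) - lion_x n B0 \<beta>1 \<beta>2 \<eta> wd x1 g S (Suc k)"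
  have "\<eta> * wd * 1 \<le> \<eta> * wd * real (Suc k)"
    using wd eta by (intro mult_left_mono) auto
  with wd have "\<eta> * wd \<le> 1" by linarith
  have z_coord: "\<bar>z $ i\<bar> \<le> 2 * \<eta>" for i
  proof -
    let ?x = "lion_x n B0 \<beta>1 \<beta>2 \<eta> wd x1 g S (Suc k) $ i"
      and ?s = "sgn ((\<Sum>j<n. lion_v n B0 \<beta>1 \<beta>2 \<eta> wd x1 g S (Suc k) j) $ i)"
    have "\<bar>wd * ?x\<bar> \<le> wd * (real (Suc k) * \<eta>)"
      unfolding abs_mult abs_of_nonneg[OF wd(1)]
      using lion_x_coord_bound[OF eta wd(1) \<open>\<eta> * wd \<le> 1\<close> x1] wd by (intro mult_left_mono)
    also have "\<dots> \<le> 1" using wd by (simp add: algebra_simps)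
    finally have "\<bar>wd * ?x\<bar> \<le> 1" .
    moreover have "\<bar>?s\<bar> \<le> 1" by (simp add: abs_sgn_eq)
    ultimately have "\<bar>?s + wd * ?x\<bar> \<le> 2" using abs_triangle_ineq[of ?s "wd * ?x"] by linarith
    moreover have "z $ i = - \<eta> * (?s + wd * ?x)"
      by (simp add: z_def lion_x_Suc_Suc vsign_def algebra_simps)
    ultimately show ?thesis using eta by (simp add: abs_mult)
  qed
  have "(norm z)\<^sup>2 = (\<Sum>i\<in>UNIV. (z $ i)\<^sup>2)"
    by (simp only: power2_norm_eq_inner) (simp add: inner_vec_def power2_eq_square)
  also have "\<dots> \<le> (\<Sum>i\<in>(UNIV::'d set). (2 * \<eta>)\<^sup>2)"
    by (intro sum_mono) (metis power2_abs power_mono[OF z_coord abs_ge_zero])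
  finally show ?thesis by (simp add: z_def power_mult_distrib mult.commute)
qed

locale dis_lion_vr =
  fixes M :: "'w measure" and D :: "nat \<Rightarrow> 's measure"
    and xi :: "nat \<times> nat \<times> nat \<Rightarrow> 'w \<Rightarrow> 's"
    and gradf :: "nat \<Rightarrow> real^'d \<Rightarrow> real^'d" and g :: "nat \<Rightarrow> real^'d \<Rightarrow> 's \<Rightarrow> real^'d"
    and n B0 T d :: nat and L \<sigma> \<beta>1 \<beta>2 \<eta> wd :: real and x1 :: "real^'d"
  assumes M: "prob_space M"
    and D: "\<And>j. j < n \<Longrightarrow> prob_space (D j)"
    and n: "1 \<le> n"
    and dim: "d = CARD('d)"
    and T: "1 \<le> T"
    and xi_distr: "\<And>k. k \<in> lion_samples n B0 \<Longrightarrow> distr M (D (fst (snd k))) (xi k) = D (fst (snd k))"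
    and xi_indep: "prob_space.indep_vars M (\<lambda>k. D (fst (snd k))) xi (lion_samples n B0)"
    and g_meas: "\<And>j. j < n \<Longrightarrow> (\<lambda>(x, s). g j x s) \<in> borel_measurable (borel \<Otimes>\<^sub>M D j)"
    and D2: "\<And>j x y. j < n \<Longrightarrow>
               (\<integral>\<^sup>+ s. ennreal ((norm (g j x s - g j y s))\<^sup>2) \<partial>D j) \<le> ennreal (L\<^sup>2 * (norm (x - y))\<^sup>2)"
    and D3_int: "\<And>j x. j < n \<Longrightarrow> integrable (D j) (g j x)"
    and D3_mean: "\<And>j x. j < n \<Longrightarrow> (\<integral>s. g j x s \<partial>D j) = gradf j x"
    and D3_var: "\<And>j x. j < n \<Longrightarrow>
               (\<integral>\<^sup>+ s. ennreal ((norm (g j x s - gradf j x))\<^sup>2) \<partial>D j) \<le> ennreal (\<sigma>\<^sup>2)"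
    and B0: "1 \<le> B0"
    and b1: "0 < \<beta>1" "\<beta>1 \<le> 1"
    and b2: "0 < \<beta>2" "\<beta>2 \<le> 1"
    and b12: "\<beta>1 \<le> sqrt \<beta>2"
    and eta: "0 < \<eta>"
    and lam: "0 \<le> wd" "wd \<le> 1 / (2 * \<eta> * real T)"
    and x1: "\<And>i. \<bar>x1 $ i\<bar> \<le> \<eta>"
begin

text \<open>The sample with index (t, j, i) is drawn from D j; the empty measure at indices
  j \<ge> n only makes the family sigma-finite.\<close>

definition node_space :: "nat \<times> nat \<times> nat \<Rightarrow> 's measure" where
  "node_space k = (if fst (snd k) < n then D (fst (snd k)) else count_space {})"

lemma lion_samples_node_less: "k \<in> lion_samples n B0 \<Longrightarrow> fst (snd k) < n"
  unfolding lion_samples_def by auto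

lemma node_space_eq: "k \<in> lion_samples n B0 \<Longrightarrow> node_space k = D (fst (snd k))"
  unfolding node_space_def using lion_samples_node_less by auto

sublocale indep_samples M node_space xi "lion_samples n B0"
proof (rule indep_samples.intro[OF M product_sigma_finite.intro indep_samples_axioms.intro])
  show "sigma_finite_measure (node_space k)" for k
    using D by (cases "fst (snd k) < n")
      (simp_all add: node_space_def prob_space_imp_sigma_finite sigma_finite_measure_count_space_finite)
  show "prob_space (node_space k)" "distr M (node_space k) (xi k) = node_space k"
    if "k \<in> lion_samples n B0" for k
    using that D xi_distr by (simp_all add: node_space_eq lion_samples_node_less)
  have "prob_space.indep_vars M node_space xi (lion_samples n B0)
        \<longleftrightarrow> prob_space.indep_vars M (\<lambda>k. D (fst (snd k))) xi (lion_samples n B0)"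
    by (rule prob_space.indep_vars_cong[OF M]) (simp_all add: node_space_eq)
  with xi_indep show "prob_space.indep_vars M node_space xi (lion_samples n B0)" by simp
qed

abbreviation iterate :: "nat \<Rightarrow> (nat \<times> nat \<times> nat \<Rightarrow> 's) \<Rightarrow> real^'d" where
  "iterate t S \<equiv> lion_x n B0 \<beta>1 \<beta>2 \<eta> wd x1 g S t"

abbreviation momentum :: "nat \<Rightarrow> (nat \<times> nat \<times> nat \<Rightarrow> 's) \<Rightarrow> nat \<Rightarrow> real^'d" where
  "momentum t S \<equiv> lion_m n B0 \<beta>1 \<beta>2 \<eta> wd x1 g S t"

abbreviation direction :: "nat \<Rightarrow> (nat \<times> nat \<times> nat \<Rightarrow> 's) \<Rightarrow> nat \<Rightarrow> real^'d" where
  "direction t S \<equiv> lion_v n B0 \<beta>1 \<beta>2 \<eta> wd x1 g S t"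

definition history :: "nat \<Rightarrow> (nat \<times> nat \<times> nat) set" where
  "history t = {k \<in> lion_samples n B0. fst k \<le> t}"

lemma history_subset: "history t \<subseteq> lion_samples n B0"
  unfolding history_def by auto

lemma history_mono: "t \<le> t' \<Longrightarrow> history t \<subseteq> history t'"
  unfolding history_def by auto

lemma finite_history: "finite (history t)"
proof (rule finite_subset)
  show "history t \<subseteq> {..t} \<times> {..<n} \<times> {..<B0}"
    using B0 unfolding history_def lion_samples_def by auto
qed auto

lemma initial_sample_in_history: "j < n \<Longrightarrow> i < B0 \<Longrightarrow> (Suc 0, j, i) \<in> history (Suc 0)"
  unfolding history_def lion_samples_def by auto

lemma fresh_sample_in_lion_samples: "j < n \<Longrightarrow> (Suc (Suc k), j, 0) \<in> lion_samples n B0"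
  unfolding lion_samples_def by auto

lemma fresh_sample_in_history: "j < n \<Longrightarrow> (Suc (Suc k), j, 0) \<in> history (Suc (Suc k))"
  unfolding history_def lion_samples_def by auto

lemma fresh_sample_notin_history: "(Suc (Suc k), j, 0) \<notin> history (Suc k)"
  unfolding history_def by auto

lemma iterate_Suc_Suc_depends:
  assumes "depends_only_on J (iterate (Suc k))"
    and "\<And>j. j < n \<Longrightarrow> depends_only_on J (\<lambda>S. direction (Suc k) S j)"
  shows "depends_only_on J (iterate (Suc (Suc k)))"
proof (rule depends_only_onI)
  fix S S' :: "nat \<times> nat \<times> nat \<Rightarrow> 's" assume S: "\<And>i. i \<in> J \<Longrightarrow> S i = S' i"
  have "iterate (Suc k) S = iterate (Suc k) S'"
    using depends_only_onD[OF assms(1) S] .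
  moreover have "(\<Sum>j<n. direction (Suc k) S j) = (\<Sum>j<n. direction (Suc k) S' j)"
    using depends_only_onD[OF assms(2) S] by simp
  ultimately show "iterate (Suc (Suc k)) S = iterate (Suc (Suc k)) S'"
    by (simp add: lion_x_Suc_Suc)
qed

lemma state_depends_only_on_history:
  "depends_only_on (history (Suc k)) (iterate (Suc k)) \<and>
   (\<forall>j<n. depends_only_on (history (Suc k)) (\<lambda>S. momentum (Suc k) S j) \<and>
          depends_only_on (history (Suc k)) (\<lambda>S. direction (Suc k) S j))"
proof (induction k)
  case 0
  show ?case
    unfolding depends_only_on_def lion_x_Suc_0 lion_m_Suc_0 lion_v_Suc_0
    by (auto intro!: sum.cong arg_cong[where f = "\<lambda>v. c *\<^sub>R v" for c] simp: initial_sample_in_history)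
next
  case (Suc k)
  have IH: "depends_only_on (history (Suc (Suc k))) (iterate (Suc k))"
    "\<And>j. j < n \<Longrightarrow> depends_only_on (history (Suc (Suc k))) (\<lambda>S. momentum (Suc k) S j)"
    "\<And>j. j < n \<Longrightarrow> depends_only_on (history (Suc (Suc k))) (\<lambda>S. direction (Suc k) S j)"
    using Suc.IH history_mono[of "Suc k" "Suc (Suc k)"] by (auto intro: depends_only_on_mono)
  have x: "depends_only_on (history (Suc (Suc k))) (iterate (Suc (Suc k)))"
    by (rule iterate_Suc_Suc_depends[OF IH(1) IH(3)])
  have "depends_only_on (history (Suc (Suc k))) (\<lambda>S. momentum (Suc (Suc k)) S j) \<and>
        depends_only_on (history (Suc (Suc k))) (\<lambda>S. direction (Suc (Suc k)) S j)" if j: "j < n" for j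
  proof (intro conjI depends_only_onI)
    fix S S' :: "nat \<times> nat \<times> nat \<Rightarrow> 's" assume S: "\<And>i. i \<in> history (Suc (Suc k)) \<Longrightarrow> S i = S' i"
    note same = depends_only_onD[OF IH(1) S] depends_only_onD[OF IH(2)[OF j] S]
      depends_only_onD[OF x S] S[OF fresh_sample_in_history[OF j]]
    show "momentum (Suc (Suc k)) S j = momentum (Suc (Suc k)) S' j"
      by (simp add: lion_m_Suc_Suc same)
    show "direction (Suc (Suc k)) S j = direction (Suc (Suc k)) S' j"
      by (simp add: lion_v_Suc_Suc same)
  qed
  with x show ?case by blast
qed

lemma iterate_depends: "depends_only_on (history (Suc k)) (iterate (Suc k))"
  using state_depends_only_on_history by blast

lemma momentum_depends: "j < n \<Longrightarrow> depends_only_on (history (Suc k)) (\<lambda>S. momentum (Suc k) S j)"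
  using state_depends_only_on_history by blast

lemma direction_depends: "j < n \<Longrightarrow> depends_only_on (history (Suc k)) (\<lambda>S. direction (Suc k) S j)"
  using state_depends_only_on_history by blast

lemma next_iterate_depends: "depends_only_on (history (Suc k)) (iterate (Suc (Suc k)))"
  using iterate_depends direction_depends by (rule iterate_Suc_Suc_depends)

lemma measurable_stoch_grad:
  assumes "j < n" "F \<in> borel_measurable N" "G \<in> measurable N (D j)"
  shows "(\<lambda>\<omega>. g j (F \<omega>) (G \<omega>)) \<in> borel_measurable N"
  using measurable_compose[OF measurable_Pair[OF assms(2,3)] g_meas[OF assms(1)]] by simp

lemma measurable_sample_component:
  "(t, j, i) \<in> J \<Longrightarrow> (t, j, i) \<in> lion_samples n B0 \<Longrightarrow>
   (\<lambda>S. S (t, j, i)) \<in> measurable (PiM J node_space) (D j)"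
  using measurable_component_singleton[of "(t, j, i)" J node_space] by (simp add: node_space_eq)

lemma borel_measurable_gradf: "j < n \<Longrightarrow> gradf j \<in> borel_measurable borel"
proof -
  assume j: "j < n"
  interpret Dj: prob_space "D j" using D[OF j] .
  have "(\<lambda>x. \<integral>s. g j x s \<partial>D j) \<in> borel_measurable borel"
    using g_meas[OF j] by (intro Dj.borel_measurable_lebesgue_integral) simp
  then show ?thesis using D3_mean[OF j] by simp
qed

lemma iterate_Suc_Suc_measurable:
  assumes [measurable]: "iterate (Suc k) \<in> borel_measurable N"
    and "\<And>j. j < n \<Longrightarrow> (\<lambda>S. direction (Suc k) S j) \<in> borel_measurable N"
  shows "iterate (Suc (Suc k)) \<in> borel_measurable N"
proof -
  have [measurable]: "(\<lambda>S. \<Sum>j<n. direction (Suc k) S j) \<in> borel_measurable N"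
    using assms(2) by (intro borel_measurable_sum) auto
  show ?thesis unfolding lion_x_Suc_Suc by measurable
qed

lemma state_measurable:
  "history (Suc k) \<subseteq> J \<Longrightarrow>
   iterate (Suc k) \<in> borel_measurable (PiM J node_space) \<and>
   (\<forall>j<n. (\<lambda>S. momentum (Suc k) S j) \<in> borel_measurable (PiM J node_space) \<and>
          (\<lambda>S. direction (Suc k) S j) \<in> borel_measurable (PiM J node_space))"
proof (induction k)
  case 0
  have "(\<lambda>S. S (Suc 0, j, i)) \<in> measurable (PiM J node_space) (D j)" if "j < n" "i < B0" for j i
    using that 0 initial_sample_in_history history_subset by (intro measurable_sample_component) blast+
  then have "(\<lambda>S. g j x1 (S (Suc 0, j, i))) \<in> borel_measurable (PiM J node_space)" if "j < n" "i < B0" for j i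
    using that by (intro measurable_stoch_grad) auto
  then show ?case
    unfolding lion_x_Suc_0 lion_m_Suc_0 lion_v_Suc_0 by (auto intro!: borel_measurable_sum)
next
  case (Suc k)
  have "history (Suc k) \<subseteq> J"
    using Suc.prems history_mono[of "Suc k" "Suc (Suc k)"] by simp
  then have IH: "iterate (Suc k) \<in> borel_measurable (PiM J node_space)"
    "\<And>j. j < n \<Longrightarrow> (\<lambda>S. momentum (Suc k) S j) \<in> borel_measurable (PiM J node_space)"
    "\<And>j. j < n \<Longrightarrow> (\<lambda>S. direction (Suc k) S j) \<in> borel_measurable (PiM J node_space)"
    using Suc.IH by blast+
  have x: "iterate (Suc (Suc k)) \<in> borel_measurable (PiM J node_space)"
    by (rule iterate_Suc_Suc_measurable[OF IH(1) IH(3)])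
  have "(\<lambda>S. momentum (Suc (Suc k)) S j) \<in> borel_measurable (PiM J node_space) \<and>
        (\<lambda>S. direction (Suc (Suc k)) S j) \<in> borel_measurable (PiM J node_space)" if j: "j < n" for j
  proof -
    have sample: "(\<lambda>S. S (Suc (Suc k), j, 0)) \<in> measurable (PiM J node_space) (D j)"
      using fresh_sample_in_history[OF j] Suc.prems
      by (intro measurable_sample_component fresh_sample_in_lion_samples[OF j]) blast
    show ?thesis
      unfolding lion_m_Suc_Suc lion_v_Suc_Suc
      by (intro conjI borel_measurable_add borel_measurable_scaleR borel_measurable_diff
          borel_measurable_const measurable_stoch_grad[OF j x sample]
          measurable_stoch_grad[OF j IH(1) sample] IH(2)[OF j])
  qed
  with x show ?case by blast
qed

lemma iterate_measurable: "history (Suc k) \<subseteq> J \<Longrightarrow> iterate (Suc k) \<in> borel_measurable (PiM J node_space)"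
  using state_measurable by blast

lemma momentum_measurable:
  "history (Suc k) \<subseteq> J \<Longrightarrow> j < n \<Longrightarrow> (\<lambda>S. momentum (Suc k) S j) \<in> borel_measurable (PiM J node_space)"
  using state_measurable by blast

lemma direction_measurable:
  "history (Suc k) \<subseteq> J \<Longrightarrow> j < n \<Longrightarrow> (\<lambda>S. direction (Suc k) S j) \<in> borel_measurable (PiM J node_space)"
  using state_measurable by blast

lemma next_iterate_measurable:
  "history (Suc k) \<subseteq> J \<Longrightarrow> iterate (Suc (Suc k)) \<in> borel_measurable (PiM J node_space)"
  by (intro iterate_Suc_Suc_measurable iterate_measurable direction_measurable)

lemma iterate_step_norm_le:
  assumes "Suc (Suc k) \<le> T"
  shows "(norm (iterate (Suc (Suc k)) S - iterate (Suc k) S))\<^sup>2 \<le> 4 * \<eta>\<^sup>2 * real d"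
  unfolding dim
proof (rule lion_x_step_norm_le[OF eta lam(1) _ x1])
  have "\<eta> * wd * real (Suc k) \<le> \<eta> * wd * real T"
    using assms eta lam by (intro mult_left_mono) auto
  also have "\<dots> \<le> 1"
    using lam eta T by (simp add: field_simps)
  finally show "\<eta> * wd * real (Suc k) \<le> 1" .
qed

definition err_m :: "nat \<Rightarrow> (nat \<times> nat \<times> nat \<Rightarrow> 's) \<Rightarrow> real^'d" where
  "err_m t S = (1 / real n) *\<^sub>R (\<Sum>j<n. momentum t S j) - (1 / real n) *\<^sub>R (\<Sum>j<n. gradf j (iterate t S))"

definition err_v :: "nat \<Rightarrow> (nat \<times> nat \<times> nat \<Rightarrow> 's) \<Rightarrow> real^'d" where
  "err_v t S = (1 / real n) *\<^sub>R (\<Sum>j<n. direction t S j) - (1 / real n) *\<^sub>R (\<Sum>j<n. gradf j (iterate t S))"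

definition noise :: "real \<Rightarrow> nat \<Rightarrow> nat \<Rightarrow> (nat \<times> nat \<times> nat \<Rightarrow> 's) \<Rightarrow> 's \<Rightarrow> real^'d" where
  "noise b t j S s = (g j (iterate (Suc t) S) s - gradf j (iterate (Suc t) S))
                     - (1 - b) *\<^sub>R (g j (iterate t S) s - gradf j (iterate t S))"

lemma err_m_avg: "err_m t S = (1 / real n) *\<^sub>R (\<Sum>j<n. momentum t S j - gradf j (iterate t S))"
  by (simp add: err_m_def sum_subtractf scaleR_diff_right)

lemma err_v_avg: "err_v t S = (1 / real n) *\<^sub>R (\<Sum>j<n. direction t S j - gradf j (iterate t S))"
  by (simp add: err_v_def sum_subtractf scaleR_diff_right)

lemma err_m_Suc_0:
  "err_m (Suc 0) S = (\<Sum>j<n. \<Sum>i<B0. (1 / (real n * real B0)) *\<^sub>R (g j x1 (S (1, j, i)) - gradf j x1))"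
proof -
  have node: "momentum (Suc 0) S j - gradf j (iterate (Suc 0) S)
        = (1 / real B0) *\<^sub>R (\<Sum>i<B0. g j x1 (S (1, j, i)) - gradf j x1)" for j
    using B0 by (simp add: lion_m_Suc_0 lion_x_Suc_0 sum_subtractf scaleR_diff_right sum_constant_scaleR
        del: sum_constant)
  show ?thesis
    unfolding err_m_avg node by (simp add: scaleR_sum_right)
qed

lemma err_v_Suc_0: "err_v (Suc 0) S = err_m (Suc 0) S"
  by (simp add: err_v_def err_m_def lion_m_Suc_0 lion_v_Suc_0)

lemma err_m_Suc_Suc:
  "err_m (Suc (Suc k)) S = (1 - \<beta>2) *\<^sub>R err_m (Suc k) S
     + (\<Sum>j<n. (1 / real n) *\<^sub>R noise \<beta>2 (Suc k) j S (S (Suc (Suc k), j, 0)))"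
proof -
  have node: "momentum (Suc (Suc k)) S j - gradf j (iterate (Suc (Suc k)) S)
        = (1 - \<beta>2) *\<^sub>R (momentum (Suc k) S j - gradf j (iterate (Suc k) S))
          + noise \<beta>2 (Suc k) j S (S (Suc (Suc k), j, 0))" for j
    by (simp add: lion_m_Suc_Suc noise_def algebra_simps)
  show ?thesis
    unfolding err_m_avg node scaleR_sum_affine ..
qed

lemma err_v_Suc_Suc:
  "err_v (Suc (Suc k)) S = (1 - \<beta>1) *\<^sub>R err_m (Suc k) S
     + (\<Sum>j<n. (1 / real n) *\<^sub>R noise \<beta>1 (Suc k) j S (S (Suc (Suc k), j, 0)))"
proof -
  have node: "direction (Suc (Suc k)) S j - gradf j (iterate (Suc (Suc k)) S)
        = (1 - \<beta>1) *\<^sub>R (momentum (Suc k) S j - gradf j (iterate (Suc k) S))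
          + noise \<beta>1 (Suc k) j S (S (Suc (Suc k), j, 0))" for j
    by (simp add: lion_v_Suc_Suc noise_def algebra_simps)
  show ?thesis
    unfolding err_v_avg err_m_avg node scaleR_sum_affine ..
qed


lemma err_m_depends: "depends_only_on (history (Suc k)) (err_m (Suc k))"
proof (rule depends_only_onI)
  fix S S' :: "nat \<times> nat \<times> nat \<Rightarrow> 's" assume S: "\<And>i. i \<in> history (Suc k) \<Longrightarrow> S i = S' i"
  have "(\<Sum>j<n. momentum (Suc k) S j) = (\<Sum>j<n. momentum (Suc k) S' j)"
    using depends_only_onD[OF momentum_depends S] by (intro sum.cong) auto
  then show "err_m (Suc k) S = err_m (Suc k) S'"
    unfolding err_m_def using depends_only_onD[OF iterate_depends S] by simp
qed

lemma err_v_depends: "depends_only_on (history (Suc k)) (err_v (Suc k))"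
proof (rule depends_only_onI)
  fix S S' :: "nat \<times> nat \<times> nat \<Rightarrow> 's" assume S: "\<And>i. i \<in> history (Suc k) \<Longrightarrow> S i = S' i"
  have "(\<Sum>j<n. direction (Suc k) S j) = (\<Sum>j<n. direction (Suc k) S' j)"
    using depends_only_onD[OF direction_depends S] by (intro sum.cong) auto
  then show "err_v (Suc k) S = err_v (Suc k) S'"
    unfolding err_v_def using depends_only_onD[OF iterate_depends S] by simp
qed

lemma noise_depends: "depends_only_on (history (Suc k)) (noise b (Suc k) j)"
proof (rule depends_only_onI)
  fix S S' :: "nat \<times> nat \<times> nat \<Rightarrow> 's" assume S: "\<And>i. i \<in> history (Suc k) \<Longrightarrow> S i = S' i"
  show "noise b (Suc k) j S = noise b (Suc k) j S'"
    by (simp add: fun_eq_iff noise_def depends_only_onD[OF iterate_depends S]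
        depends_only_onD[OF next_iterate_depends S])
qed

lemma err_m_measurable: "history (Suc k) \<subseteq> J \<Longrightarrow> err_m (Suc k) \<in> borel_measurable (PiM J node_space)"
  unfolding err_m_def[abs_def]
  by (intro borel_measurable_diff borel_measurable_scaleR borel_measurable_const borel_measurable_sum
      momentum_measurable measurable_compose[OF iterate_measurable borel_measurable_gradf]) auto

lemma err_v_measurable: "history (Suc k) \<subseteq> J \<Longrightarrow> err_v (Suc k) \<in> borel_measurable (PiM J node_space)"
  unfolding err_v_def[abs_def]
  by (intro borel_measurable_diff borel_measurable_scaleR borel_measurable_const borel_measurable_sum
      direction_measurable measurable_compose[OF iterate_measurable borel_measurable_gradf]) auto

lemma err_m_sample_measurable: "(\<lambda>\<omega>. err_m (Suc k) (\<lambda>i. xi i \<omega>)) \<in> borel_measurable M"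
  by (rule measurable_sample_functional[OF history_subset err_m_depends err_m_measurable[OF order_refl]])

lemma err_v_sample_measurable: "(\<lambda>\<omega>. err_v (Suc k) (\<lambda>i. xi i \<omega>)) \<in> borel_measurable M"
  by (rule measurable_sample_functional[OF history_subset err_v_depends err_v_measurable[OF order_refl]])

lemma noise_measurable:
  assumes j: "j < n" and J: "history (Suc k) \<subseteq> J"
  shows "(\<lambda>p. noise b (Suc k) j (fst p) (snd p)) \<in> borel_measurable (PiM J node_space \<Otimes>\<^sub>M D j)"
proof -
  have x: "(\<lambda>p. iterate (Suc k) (fst p)) \<in> borel_measurable (PiM J node_space \<Otimes>\<^sub>M D j)"
    "(\<lambda>p. iterate (Suc (Suc k)) (fst p)) \<in> borel_measurable (PiM J node_space \<Otimes>\<^sub>M D j)"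
    using measurable_compose[OF measurable_fst iterate_measurable[OF J]]
      measurable_compose[OF measurable_fst next_iterate_measurable[OF J]] by auto
  show ?thesis
    unfolding noise_def
    by (intro borel_measurable_diff borel_measurable_scaleR borel_measurable_const
        measurable_stoch_grad[OF j x(1) measurable_snd] measurable_stoch_grad[OF j x(2) measurable_snd]
        measurable_compose[OF x(1) borel_measurable_gradf[OF j]]
        measurable_compose[OF x(2) borel_measurable_gradf[OF j]])
qed

lemma noise_integrable: "j < n \<Longrightarrow> integrable (D j) (noise b t j S)"
proof -
  assume j: "j < n"
  interpret Dj: prob_space "D j" using D[OF j] .
  show ?thesis unfolding noise_def[abs_def] using D3_int[OF j] by simp
qed

lemma noise_mean_zero: "j < n \<Longrightarrow> (\<integral>s. noise b t j S s \<partial>D j) = 0"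
proof -
  assume j: "j < n"
  interpret Dj: prob_space "D j" using D[OF j] .
  show ?thesis unfolding noise_def using D3_int[OF j] D3_mean[OF j] by (simp add: Dj.prob_space)
qed

lemma nn_integral_noise_le:
  assumes j: "j < n" and b: "0 \<le> b" "b \<le> 1"
  shows "(\<integral>\<^sup>+s. ennreal ((norm (noise b t j S s))\<^sup>2) \<partial>D j)
         \<le> ennreal (2 * b\<^sup>2 * \<sigma>\<^sup>2 + 2 * (L\<^sup>2 * (norm (iterate (Suc t) S - iterate t S))\<^sup>2))"
  unfolding noise_def
  by (rule nn_integral_momentum_noise_le[OF D[OF j] D3_int[OF j] D3_int[OF j] D3_mean[OF j] D3_mean[OF j]
        D3_var[OF j] D2[OF j] b]) simp

lemma grad_noise_integrable: "j < n \<Longrightarrow> integrable (D j) (\<lambda>s. c *\<^sub>R (g j x s - gradf j x))"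
proof -
  assume j: "j < n"
  interpret Dj: prob_space "D j" using D[OF j] .
  show ?thesis using D3_int[OF j] by simp
qed

lemma grad_noise_mean_zero: "j < n \<Longrightarrow> (\<integral>s. c *\<^sub>R (g j x s - gradf j x) \<partial>D j) = 0"
proof -
  assume j: "j < n"
  interpret Dj: prob_space "D j" using D[OF j] .
  show ?thesis using D3_int[OF j] D3_mean[OF j] by (simp add: Dj.prob_space)
qed

lemma nn_integral_grad_noise_le:
  "j < n \<Longrightarrow> (\<integral>\<^sup>+s. ennreal ((norm (c *\<^sub>R (g j x s - gradf j x)))\<^sup>2) \<partial>D j) \<le> ennreal (c\<^sup>2 * \<sigma>\<^sup>2)"
proof -
  assume j: "j < n"
  have "(\<integral>\<^sup>+s. ennreal ((norm (c *\<^sub>R (g j x s - gradf j x)))\<^sup>2) \<partial>D j)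
      = ennreal (c\<^sup>2) * (\<integral>\<^sup>+s. ennreal ((norm (g j x s - gradf j x))\<^sup>2) \<partial>D j)"
    using D3_int[OF j] by (intro nn_integral_norm_scaleR_power2) auto
  also have "\<dots> \<le> ennreal (c\<^sup>2) * ennreal (\<sigma>\<^sup>2)"
    by (intro mult_left_mono D3_var j) auto
  finally show ?thesis by (simp add: ennreal_mult)
qed

definition noise_var :: "real \<Rightarrow> real" where
  "noise_var b = (2 * b\<^sup>2 * \<sigma>\<^sup>2 + 8 * L\<^sup>2 * \<eta>\<^sup>2 * real d) / real n"

lemma noise_var_nonneg: "0 \<le> noise_var b"
  unfolding noise_var_def by simp

lemma noise_var_beta1_le: "noise_var \<beta>1 \<le> noise_var \<beta>2 / \<beta>2"
proof -
  let ?K = "8 * L\<^sup>2 * \<eta>\<^sup>2 * real d"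
  have "\<beta>1\<^sup>2 \<le> \<beta>2"
    using power_mono[OF b12, of 2] b1 b2 by simp
  then have "2 * \<beta>1\<^sup>2 * \<sigma>\<^sup>2 \<le> 2 * \<beta>2 * \<sigma>\<^sup>2"
    by (simp add: mult_right_mono)
  moreover have "?K \<le> ?K / \<beta>2"
    using b2 by (simp add: le_divide_eq mult_left_le)
  ultimately have "2 * \<beta>1\<^sup>2 * \<sigma>\<^sup>2 + ?K \<le> (2 * \<beta>2\<^sup>2 * \<sigma>\<^sup>2 + ?K) / \<beta>2"
    using b2 by (simp add: add_divide_distrib power2_eq_square)
  then have "(2 * \<beta>1\<^sup>2 * \<sigma>\<^sup>2 + ?K) / real n \<le> (2 * \<beta>2\<^sup>2 * \<sigma>\<^sup>2 + ?K) / \<beta>2 / real n"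
    by (rule divide_right_mono) simp
  then show ?thesis
    unfolding noise_var_def by (metis divide_divide_eq_left mult.commute)
qed

lemma nn_integral_scaled_noise_le:
  assumes j: "j < n" and b: "0 \<le> b" "b \<le> 1" and k: "Suc (Suc k) \<le> T"
  shows "(\<integral>\<^sup>+s. ennreal ((norm ((1 / real n) *\<^sub>R noise b (Suc k) j S s))\<^sup>2) \<partial>D j)
         \<le> ennreal (noise_var b / real n)"
proof -
  have "(\<integral>\<^sup>+s. ennreal ((norm ((1 / real n) *\<^sub>R noise b (Suc k) j S s))\<^sup>2) \<partial>D j)
      = ennreal ((1 / real n)\<^sup>2) * (\<integral>\<^sup>+s. ennreal ((norm (noise b (Suc k) j S s))\<^sup>2) \<partial>D j)"
    using noise_integrable[OF j] by (intro nn_integral_norm_scaleR_power2) auto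
  also have "\<dots> \<le> ennreal ((1 / real n)\<^sup>2)
      * ennreal (2 * b\<^sup>2 * \<sigma>\<^sup>2 + 2 * (L\<^sup>2 * (norm (iterate (Suc (Suc k)) S - iterate (Suc k) S))\<^sup>2))"
    by (intro mult_left_mono nn_integral_noise_le j b) auto
  also have "\<dots> \<le> ennreal ((1 / real n)\<^sup>2) * ennreal (2 * b\<^sup>2 * \<sigma>\<^sup>2 + 2 * (L\<^sup>2 * (4 * \<eta>\<^sup>2 * real d)))"
    using iterate_step_norm_le[OF k, of S] by (intro mult_left_mono ennreal_leI add_left_mono) auto
  also have "\<dots> = ennreal ((1 / real n)\<^sup>2 * (2 * b\<^sup>2 * \<sigma>\<^sup>2 + 2 * (L\<^sup>2 * (4 * \<eta>\<^sup>2 * real d))))"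
    by (rule ennreal_mult[symmetric]) auto
  also have "\<dots> = ennreal (noise_var b / real n)"
    using n by (simp add: noise_var_def power2_eq_square field_simps)
  finally show ?thesis .
qed

definition mse_m :: "nat \<Rightarrow> ennreal" where
  "mse_m t = (\<integral>\<^sup>+\<omega>. ennreal ((norm (err_m t (\<lambda>i. xi i \<omega>)))\<^sup>2) \<partial>M)"

definition mse_v :: "nat \<Rightarrow> ennreal" where
  "mse_v t = (\<integral>\<^sup>+\<omega>. ennreal ((norm (err_v t (\<lambda>i. xi i \<omega>)))\<^sup>2) \<partial>M)"

lemma nn_integral_add_node_noise:
  fixes \<psi> :: "nat \<Rightarrow> (nat \<times> nat \<times> nat \<Rightarrow> 's) \<Rightarrow> 's \<Rightarrow> real^'d"
  assumes J: "finite J" "J \<subseteq> lion_samples n B0"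
    and Ks: "finite Ks" "Ks \<subseteq> lion_samples n B0" "Ks \<inter> J = {}"
    and W: "depends_only_on J W" "\<And>J'. J \<subseteq> J' \<Longrightarrow> W \<in> borel_measurable (PiM J' node_space)"
    and \<psi>: "\<And>j. j < n \<Longrightarrow> depends_only_on J (\<psi> j)"
      "\<And>j J'. j < n \<Longrightarrow> J \<subseteq> J' \<Longrightarrow>
         (\<lambda>p. \<psi> j (fst p) (snd p)) \<in> borel_measurable (PiM J' node_space \<Otimes>\<^sub>M D j)"
      "\<And>j S. j < n \<Longrightarrow> integrable (D j) (\<psi> j S)"
      "\<And>j S. j < n \<Longrightarrow> (\<integral>s. \<psi> j S s \<partial>D j) = 0"
      "\<And>j S. j < n \<Longrightarrow> (\<integral>\<^sup>+s. ennreal ((norm (\<psi> j S s))\<^sup>2) \<partial>D j) \<le> ennreal C"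
    and C: "0 \<le> C"
  shows "(\<integral>\<^sup>+\<omega>. ennreal ((norm (W (\<lambda>i. xi i \<omega>) + (\<Sum>k\<in>Ks. \<psi> (fst (snd k)) (\<lambda>i. xi i \<omega>) (xi k \<omega>))))\<^sup>2) \<partial>M)
         \<le> (\<integral>\<^sup>+\<omega>. ennreal ((norm (W (\<lambda>i. xi i \<omega>)))\<^sup>2) \<partial>M) + ennreal (real (card Ks) * C)"
proof -
  have node: "node_space k = D (fst (snd k)) \<and> fst (snd k) < n" if "k \<in> Ks" for k
    using that Ks(2) by (auto simp: node_space_eq lion_samples_node_less)
  show ?thesis
    by (rule nn_integral_add_centered_samples[OF J Ks W]) (simp_all add: node \<psi> C)
qed

lemma nn_integral_err_step_le:
  assumes k: "Suc (Suc k) \<le> T" and b: "0 \<le> b" "b \<le> 1"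
  shows "(\<integral>\<^sup>+\<omega>. ennreal ((norm ((1 - b) *\<^sub>R err_m (Suc k) (\<lambda>i. xi i \<omega>)
            + (\<Sum>j<n. (1 / real n) *\<^sub>R noise b (Suc k) j (\<lambda>i. xi i \<omega>) (xi (Suc (Suc k), j, 0) \<omega>))))\<^sup>2) \<partial>M)
         \<le> ennreal ((1 - b)\<^sup>2) * mse_m (Suc k) + ennreal (noise_var b)"
proof -
  define fresh where "fresh = (\<lambda>j. (Suc (Suc k), j, 0::nat)) ` {..<n}"
  have inj: "inj_on (\<lambda>j. (Suc (Suc k), j, 0::nat)) {..<n}"
    by (auto simp: inj_on_def)
  have fresh: "finite fresh" "fresh \<subseteq> lion_samples n B0" "fresh \<inter> history (Suc k) = {}"
    using fresh_sample_in_lion_samples fresh_sample_notin_history by (auto simp: fresh_def)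
  have "(\<integral>\<^sup>+\<omega>. ennreal ((norm ((1 - b) *\<^sub>R err_m (Suc k) (\<lambda>i. xi i \<omega>)
            + (\<Sum>key\<in>fresh. (1 / real n) *\<^sub>R noise b (Suc k) (fst (snd key)) (\<lambda>i. xi i \<omega>) (xi key \<omega>))))\<^sup>2) \<partial>M)
        \<le> (\<integral>\<^sup>+\<omega>. ennreal ((norm ((1 - b) *\<^sub>R err_m (Suc k) (\<lambda>i. xi i \<omega>)))\<^sup>2) \<partial>M)
          + ennreal (real (card fresh) * (noise_var b / real n))"
  proof (rule nn_integral_add_node_noise[OF finite_history history_subset fresh,
        where W = "\<lambda>S. (1 - b) *\<^sub>R err_m (Suc k) S" and \<psi> = "\<lambda>j S s. (1 / real n) *\<^sub>R noise b (Suc k) j S s"])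
    show "depends_only_on (history (Suc k)) (\<lambda>S. (1 - b) *\<^sub>R err_m (Suc k) S)"
      by (rule depends_only_on_comp[OF err_m_depends])
    show "(\<lambda>S. (1 - b) *\<^sub>R err_m (Suc k) S) \<in> borel_measurable (PiM J node_space)"
      if "history (Suc k) \<subseteq> J" for J
      using err_m_measurable[OF that] by measurable
    show "depends_only_on (history (Suc k)) (\<lambda>S s. (1 / real n) *\<^sub>R noise b (Suc k) j S s)" for j
      using noise_depends unfolding depends_only_on_def by metis
    show "(\<lambda>p. (1 / real n) *\<^sub>R noise b (Suc k) j (fst p) (snd p)) \<in> borel_measurable (PiM J node_space \<Otimes>\<^sub>M D j)"
      if "j < n" "history (Suc k) \<subseteq> J" for j J
      by (intro borel_measurable_scaleR borel_measurable_const noise_measurable that)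
    show "integrable (D j) (\<lambda>s. (1 / real n) *\<^sub>R noise b (Suc k) j S s)" if "j < n" for j S
      using integrable_scaleR_right[OF noise_integrable[OF that]] by simp
    show "(\<integral>s. (1 / real n) *\<^sub>R noise b (Suc k) j S s \<partial>D j) = 0" if "j < n" for j S
      using noise_mean_zero[OF that] by simp
    show "(\<integral>\<^sup>+s. ennreal ((norm ((1 / real n) *\<^sub>R noise b (Suc k) j S s))\<^sup>2) \<partial>D j) \<le> ennreal (noise_var b / real n)"
      if "j < n" for j S
      by (rule nn_integral_scaled_noise_le[OF that b k])
  qed (simp add: noise_var_nonneg)
  also have "(\<integral>\<^sup>+\<omega>. ennreal ((norm ((1 - b) *\<^sub>R err_m (Suc k) (\<lambda>i. xi i \<omega>)))\<^sup>2) \<partial>M)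
      = ennreal ((1 - b)\<^sup>2) * mse_m (Suc k)"
    unfolding mse_m_def by (rule nn_integral_norm_scaleR_power2[OF err_m_sample_measurable])
  also have "real (card fresh) * (noise_var b / real n) = noise_var b"
    using n by (simp add: fresh_def card_image[OF inj])
  finally show ?thesis
    by (simp add: fresh_def sum.reindex[OF inj])
qed

lemma mse_m_Suc_0_le: "mse_m (Suc 0) \<le> ennreal (\<sigma>\<^sup>2 / (real n * real B0))"
proof -
  define initial where "initial = (\<lambda>(j, i). (Suc 0, j, i)) ` ({..<n} \<times> {..<B0})"
  have inj: "inj_on (\<lambda>(j, i). (Suc 0, j, i)) ({..<n} \<times> {..<B0})"
    by (auto simp: inj_on_def)
  have initial: "finite initial" "initial \<subseteq> lion_samples n B0" "initial \<inter> {} = {}"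
    by (auto simp: initial_def lion_samples_def)
  have card_initial: "card initial = n * B0"
    unfolding initial_def by (subst card_image[OF inj]) (simp add: card_cartesian_product)
  define c where "c = 1 / (real n * real B0)"
  have sum_initial: "(\<Sum>key\<in>initial. c *\<^sub>R (g (fst (snd key)) x1 (S key) - gradf (fst (snd key)) x1))
      = err_m (Suc 0) S" for S
    unfolding initial_def err_m_Suc_0 sum.reindex[OF inj] c_def
    by (simp add: sum.cartesian_product case_prod_beta)
  have "(\<integral>\<^sup>+\<omega>. ennreal ((norm (0 + (\<Sum>key\<in>initial.
            c *\<^sub>R (g (fst (snd key)) x1 (xi key \<omega>) - gradf (fst (snd key)) x1))))\<^sup>2) \<partial>M)
        \<le> (\<integral>\<^sup>+\<omega>. ennreal ((norm (0 :: real^'d))\<^sup>2) \<partial>M) + ennreal (real (card initial) * (c\<^sup>2 * \<sigma>\<^sup>2))"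
  proof (rule nn_integral_add_node_noise[OF finite.emptyI empty_subsetI initial,
        where W = "\<lambda>_. 0" and \<psi> = "\<lambda>j S s. c *\<^sub>R (g j x1 s - gradf j x1)"])
    show "(\<lambda>p. c *\<^sub>R (g j x1 (snd p) - gradf j x1)) \<in> borel_measurable (PiM J node_space \<Otimes>\<^sub>M D j)"
      if "j < n" for j J
      using borel_measurable_integrable[OF grad_noise_integrable[OF that, where c = c and x = x1]]
      by (rule measurable_compose[OF measurable_snd])
    show "(\<integral>s. c *\<^sub>R (g j x1 s - gradf j x1) \<partial>D j) = 0" if "j < n" for j
      by (rule grad_noise_mean_zero[OF that])
    show "(\<integral>\<^sup>+s. ennreal ((norm (c *\<^sub>R (g j x1 s - gradf j x1)))\<^sup>2) \<partial>D j) \<le> ennreal (c\<^sup>2 * \<sigma>\<^sup>2)"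
      if "j < n" for j
      by (rule nn_integral_grad_noise_le[OF that])
  qed (simp_all add: depends_only_on_def grad_noise_integrable)
  also have "real (card initial) * (c\<^sup>2 * \<sigma>\<^sup>2) = \<sigma>\<^sup>2 / (real n * real B0)"
    using n B0 by (simp add: card_initial c_def power2_eq_square)
  finally show ?thesis
    by (simp add: mse_m_def sum_initial)
qed

lemma mse_m_Suc_Suc_le:
  "Suc (Suc k) \<le> T \<Longrightarrow> mse_m (Suc (Suc k)) \<le> ennreal ((1 - \<beta>2)\<^sup>2) * mse_m (Suc k) + ennreal (noise_var \<beta>2)"
  unfolding mse_m_def[of "Suc (Suc k)"] err_m_Suc_Suc using b2 by (intro nn_integral_err_step_le) auto

lemma mse_v_Suc_Suc_le:
  "Suc (Suc k) \<le> T \<Longrightarrow> mse_v (Suc (Suc k)) \<le> ennreal ((1 - \<beta>1)\<^sup>2) * mse_m (Suc k) + ennreal (noise_var \<beta>1)"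
  unfolding mse_v_def err_v_Suc_Suc using b1 by (intro nn_integral_err_step_le) auto

primrec mse_bound :: "nat \<Rightarrow> real" where
  "mse_bound 0 = \<sigma>\<^sup>2 / (real n * real B0)"
| "mse_bound (Suc k) = (1 - \<beta>2) * mse_bound k + noise_var \<beta>2"

lemma mse_bound_nonneg: "0 \<le> mse_bound k"
  by (induction k) (use b2 noise_var_nonneg in auto)

lemma mse_m_le_bound: "k < T \<Longrightarrow> mse_m (Suc k) \<le> ennreal (mse_bound k)"
proof (induction k)
  case 0
  then show ?case using mse_m_Suc_0_le by simp
next
  case (Suc k)
  have "mse_m (Suc (Suc k)) \<le> ennreal ((1 - \<beta>2)\<^sup>2) * mse_m (Suc k) + ennreal (noise_var \<beta>2)"
    using Suc.prems by (intro mse_m_Suc_Suc_le) simp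
  also have "\<dots> \<le> ennreal ((1 - \<beta>2)\<^sup>2) * ennreal (mse_bound k) + ennreal (noise_var \<beta>2)"
    using Suc by (intro add_right_mono mult_left_mono) auto
  also have "\<dots> \<le> ennreal (mse_bound (Suc k))"
  proof -
    have "(1 - \<beta>2)\<^sup>2 * mse_bound k \<le> (1 - \<beta>2) * mse_bound k"
      using b2 mse_bound_nonneg[of k] by (intro mult_right_mono) (auto simp: power2_eq_square mult_left_le)
    then show ?thesis
      using mse_bound_nonneg[of k] noise_var_nonneg[of \<beta>2]
      by (simp add: ennreal_mult[symmetric] flip: ennreal_plus) (rule ennreal_leI, simp)
  qed
  finally show ?case .
qed

text \<open>At k = 0 the truncated k - 1 is 0: the bound is then that of mse_v 1 = mse_m 1.\<close>

lemma mse_v_le_bound: "k < T \<Longrightarrow> mse_v (Suc k) \<le> ennreal (mse_bound (k - 1) + noise_var \<beta>1)"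
proof (cases k)
  case 0
  assume "k < T"
  have "mse_v (Suc 0) \<le> ennreal (mse_bound 0)"
    using mse_m_le_bound[of 0] T by (simp add: mse_v_def mse_m_def err_v_Suc_0)
  also have "\<dots> \<le> ennreal (mse_bound 0 + noise_var \<beta>1)"
    by (simp add: noise_var_nonneg)
  finally show ?thesis using 0 by simp
next
  case (Suc k')
  assume "k < T"
  have "mse_v (Suc (Suc k')) \<le> ennreal ((1 - \<beta>1)\<^sup>2) * mse_m (Suc k') + ennreal (noise_var \<beta>1)"
    using Suc \<open>k < T\<close> by (intro mse_v_Suc_Suc_le) simp
  also have "\<dots> \<le> ennreal ((1 - \<beta>1)\<^sup>2) * ennreal (mse_bound k') + ennreal (noise_var \<beta>1)"
    using mse_m_le_bound[of k'] Suc \<open>k < T\<close> by (intro add_right_mono mult_left_mono) auto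
  also have "\<dots> \<le> ennreal (mse_bound k' + noise_var \<beta>1)"
  proof -
    have "(1 - \<beta>1)\<^sup>2 * mse_bound k' \<le> mse_bound k'"
      using b1 mse_bound_nonneg[of k'] by (intro mult_left_le_one_le) (auto simp: power_le_one)
    then show ?thesis
      using mse_bound_nonneg[of k'] noise_var_nonneg[of \<beta>1]
      by (simp add: ennreal_mult[symmetric] flip: ennreal_plus)
  qed
  finally show ?thesis using Suc by simp
qed

lemma sum_mse_bound_le: "(\<Sum>k<T. mse_bound k) \<le> (mse_bound 0 + real T * noise_var \<beta>2) / \<beta>2"
  using sum_le_of_linear_recurrence[of mse_bound \<beta>2 "noise_var \<beta>2" T] mse_bound_nonneg b2
  by (simp add: pos_le_divide_eq mult.commute)

lemma sum_shifted_mse_bound_le: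
  "(\<Sum>k<T. mse_bound (k - 1) + noise_var \<beta>1) \<le> 2 * (mse_bound 0 + real T * noise_var \<beta>2) / \<beta>2"
proof -
  let ?a0 = "mse_bound 0" and ?c = "noise_var \<beta>2"
  obtain T' where T': "T = Suc T'" using T by (cases T) auto
  have "(\<Sum>k<T. mse_bound (k - 1)) = ?a0 + (\<Sum>k<T'. mse_bound k)"
    unfolding T' sum.lessThan_Suc_shift by simp
  also have "\<dots> \<le> ?a0 + (\<Sum>k<T. mse_bound k)"
    unfolding T' using mse_bound_nonneg[of T'] by simp
  finally have "(\<Sum>k<T. mse_bound (k - 1) + noise_var \<beta>1) \<le> ?a0 + (\<Sum>k<T. mse_bound k) + real T * noise_var \<beta>1"
    by (simp add: sum.distrib)
  moreover have "real T * noise_var \<beta>1 \<le> real T * ?c / \<beta>2"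
    using mult_left_mono[OF noise_var_beta1_le, of "real T"] by simp
  moreover have "?a0 \<le> ?a0 / \<beta>2"
    using b2 mse_bound_nonneg[of 0] by (simp add: le_divide_eq mult_left_le del: mse_bound.simps)
  moreover have "2 * (?a0 + real T * ?c) / \<beta>2 = ?a0 / \<beta>2 + (?a0 + real T * ?c) / \<beta>2 + real T * ?c / \<beta>2"
    using b2 by (simp add: field_simps del: mse_bound.simps)
  ultimately show ?thesis
    using sum_mse_bound_le by linarith
qed

lemma avg_err_m_le:
  "(\<integral>\<^sup>+\<omega>. ennreal ((1 / real T) * (\<Sum>t=1..T. (norm (err_m t (\<lambda>i. xi i \<omega>)))\<^sup>2)) \<partial>M)
   \<le> ennreal (\<sigma>\<^sup>2 / (real n * \<beta>2 * real B0 * real T) + 2 * \<sigma>\<^sup>2 * \<beta>2 / real n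
              + 8 * L\<^sup>2 * \<eta>\<^sup>2 * real d / (real n * \<beta>2))"
proof -
  have "(\<integral>\<^sup>+\<omega>. ennreal ((1 / real T) * (\<Sum>t=1..T. (norm (err_m t (\<lambda>i. xi i \<omega>)))\<^sup>2)) \<partial>M)
      \<le> ennreal ((1 / real T) * (\<Sum>k<T. mse_bound k))"
    using err_m_sample_measurable mse_m_le_bound mse_bound_nonneg
    by (intro nn_integral_time_average_le[where F = "\<lambda>t \<omega>. err_m t (\<lambda>i. xi i \<omega>)"])
      (auto simp: mse_m_def)
  also have "\<dots> \<le> ennreal ((1 / real T) * ((mse_bound 0 + real T * noise_var \<beta>2) / \<beta>2))"
    using sum_mse_bound_le by (intro ennreal_leI mult_left_mono) auto
  also have "(1 / real T) * ((mse_bound 0 + real T * noise_var \<beta>2) / \<beta>2)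
      = \<sigma>\<^sup>2 / (real n * \<beta>2 * real B0 * real T) + 2 * \<sigma>\<^sup>2 * \<beta>2 / real n
        + 8 * L\<^sup>2 * \<eta>\<^sup>2 * real d / (real n * \<beta>2)"
    using n T B0 b2 by (simp add: noise_var_def field_simps power2_eq_square)
  finally show ?thesis .
qed

lemma avg_err_v_le:
  "(\<integral>\<^sup>+\<omega>. ennreal ((1 / real T) * (\<Sum>t=1..T. (norm (err_v t (\<lambda>i. xi i \<omega>)))\<^sup>2)) \<partial>M)
   \<le> ennreal (2 * \<sigma>\<^sup>2 / (\<beta>2 * real n * real B0 * real T) + 16 * \<eta>\<^sup>2 * L\<^sup>2 * real d / (real n * \<beta>2)
              + 4 * \<beta>2 * \<sigma>\<^sup>2 / real n)"
proof -
  let ?a0 = "mse_bound 0" and ?c = "noise_var \<beta>2"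
  have "(\<integral>\<^sup>+\<omega>. ennreal ((1 / real T) * (\<Sum>t=1..T. (norm (err_v t (\<lambda>i. xi i \<omega>)))\<^sup>2)) \<partial>M)
      \<le> ennreal ((1 / real T) * (\<Sum>k<T. mse_bound (k - 1) + noise_var \<beta>1))"
    using err_v_sample_measurable mse_v_le_bound mse_bound_nonneg noise_var_nonneg
    by (intro nn_integral_time_average_le[where F = "\<lambda>t \<omega>. err_v t (\<lambda>i. xi i \<omega>)"])
      (auto simp: mse_v_def intro: add_nonneg_nonneg)
  also have "\<dots> \<le> ennreal ((1 / real T) * (2 * (?a0 + real T * ?c) / \<beta>2))"
    using sum_shifted_mse_bound_le by (intro ennreal_leI mult_left_mono) auto
  also have "(1 / real T) * (2 * (?a0 + real T * ?c) / \<beta>2)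
      = 2 * \<sigma>\<^sup>2 / (\<beta>2 * real n * real B0 * real T) + 16 * \<eta>\<^sup>2 * L\<^sup>2 * real d / (real n * \<beta>2)
        + 4 * \<beta>2 * \<sigma>\<^sup>2 / real n"
    using n T B0 b2 by (simp add: noise_var_def field_simps power2_eq_square)
  finally show ?thesis .
qed

end

theorem mainTheorem9:
  fixes M :: "'w measure"
    and D :: "nat \<Rightarrow> 's measure"
    and xi :: "nat \<times> nat \<times> nat \<Rightarrow> 'w \<Rightarrow> 's"
    and f :: "nat \<Rightarrow> real^'d \<Rightarrow> real"
    and fs :: "nat \<Rightarrow> real^'d \<Rightarrow> 's \<Rightarrow> real"
    and gradf :: "nat \<Rightarrow> real^'d \<Rightarrow> real^'d"
    and g :: "nat \<Rightarrow> real^'d \<Rightarrow> 's \<Rightarrow> real^'d"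
    and n B0 T d :: nat
    and L \<sigma> \<beta>1 \<beta>2 \<eta> wd :: real
    and x1 :: "real^'d"
  assumes M: "prob_space M"
    and D: "\<And>j. j < n \<Longrightarrow> prob_space (D j)"
    and n: "1 \<le> n"
    and dim: "d = CARD('d)"
    and T: "1 \<le> T"
    \<comment> \<open>sampling: xi (t,j,i) ~ D_j, all drawn samples mutually independent\<close>
    and xi_distr: "\<And>k. k \<in> lion_samples n B0 \<Longrightarrow>
                     distr M (D (fst (snd k))) (xi k) = D (fst (snd k))"
    and xi_indep: "prob_space.indep_vars M (\<lambda>k. D (fst (snd k))) xi (lion_samples n B0)"
    \<comment> \<open>f_j(x) = E f_j(x;xi), stochastic gradients are gradients of the sample functions\<close>
    and g_meas: "\<And>j. j < n \<Longrightarrow>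
                   (\<lambda>(x, s). g j x s) \<in> borel_measurable (borel \<Otimes>\<^sub>M D j)"
    and fs_grad: "\<And>j x s. j < n \<Longrightarrow> s \<in> space (D j) \<Longrightarrow>
                   ((\<lambda>y. fs j y s) has_derivative (\<lambda>h. g j x s \<bullet> h)) (at x)"
    and f_int: "\<And>j x. j < n \<Longrightarrow> integrable (D j) (fs j x)"
    and f_def: "\<And>j x. j < n \<Longrightarrow> f j x = (\<integral>s. fs j x s \<partial>D j)"
    and f_grad: "\<And>j x. j < n \<Longrightarrow> (f j has_derivative (\<lambda>h. gradf j x \<bullet> h)) (at x)"
    \<comment> \<open>(D2)\<close>
    and D2: "\<And>j x y. j < n \<Longrightarrow>
               (\<integral>\<^sup>+ s. ennreal ((norm (g j x s - g j y s))\<^sup>2) \<partial>D j)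
                 \<le> ennreal (L\<^sup>2 * (norm (x - y))\<^sup>2)"
    \<comment> \<open>(D3)\<close>
    and D3_int: "\<And>j x. j < n \<Longrightarrow> integrable (D j) (g j x)"
    and D3_mean: "\<And>j x. j < n \<Longrightarrow> (\<integral>s. g j x s \<partial>D j) = gradf j x"
    and D3_var: "\<And>j x. j < n \<Longrightarrow>
               (\<integral>\<^sup>+ s. ennreal ((norm (g j x s - gradf j x))\<^sup>2) \<partial>D j) \<le> ennreal (\<sigma>\<^sup>2)"
    \<comment> \<open>parameters\<close>
    and B0: "1 \<le> B0"
    and b1: "0 < \<beta>1" "\<beta>1 \<le> 1"
    and b2: "0 < \<beta>2" "\<beta>2 \<le> 1"
    and b12: "\<beta>1 \<le> sqrt \<beta>2"
    and B0b2: "real B0 * \<beta>2 \<le> 1"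
    and eta: "0 < \<eta>"
    and lam: "0 \<le> wd" "wd \<le> 1 / (2 * \<eta> * real T)"
    and x1: "\<And>i. \<bar>x1 $ i\<bar> \<le> \<eta>"
  shows "(\<integral>\<^sup>+ \<omega>. ennreal ((1 / real T) * (\<Sum>t=1..T.
            (norm ((1 / real n) *\<^sub>R (\<Sum>j<n. lion_m n B0 \<beta>1 \<beta>2 \<eta> wd x1 g (\<lambda>k. xi k \<omega>) t j)
                   - (1 / real n) *\<^sub>R (\<Sum>j<n. gradf j (lion_x n B0 \<beta>1 \<beta>2 \<eta> wd x1 g (\<lambda>k. xi k \<omega>) t))))\<^sup>2))
          \<partial>M)
         \<le> ennreal (\<sigma>\<^sup>2 / (real n * \<beta>2 * real B0 * real T) + 2 * \<sigma>\<^sup>2 * \<beta>2 / real n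
                    + 8 * L\<^sup>2 * \<eta>\<^sup>2 * real d / (real n * \<beta>2))
       \<and> (\<integral>\<^sup>+ \<omega>. ennreal ((1 / real T) * (\<Sum>t=1..T.
            (norm ((1 / real n) *\<^sub>R (\<Sum>j<n. lion_v n B0 \<beta>1 \<beta>2 \<eta> wd x1 g (\<lambda>k. xi k \<omega>) t j)
                   - (1 / real n) *\<^sub>R (\<Sum>j<n. gradf j (lion_x n B0 \<beta>1 \<beta>2 \<eta> wd x1 g (\<lambda>k. xi k \<omega>) t))))\<^sup>2))
          \<partial>M)
         \<le> ennreal (2 * \<sigma>\<^sup>2 / (\<beta>2 * real n * real B0 * real T) + 16 * \<eta>\<^sup>2 * L\<^sup>2 * real d / (real n * \<beta>2)
                    + 4 * \<beta>2 * \<sigma>\<^sup>2 / real n)"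
proof -
  \<comment> \<open>Only the stochastic gradients enter the bounds.\<close>
  interpret lion: dis_lion_vr M D xi gradf g n B0 T d L \<sigma> \<beta>1 \<beta>2 \<eta> wd x1
    by (rule dis_lion_vr.intro) (fact assms)+
  show ?thesis
    using lion.avg_err_m_le lion.avg_err_v_le unfolding lion.err_m_def lion.err_v_def by blast
qed

end
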